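(* Let $Alg$ be a classical Cholesky decomposition algorithm for $n{\times}n$ matrices implemented on a machine with a constant number $d$ of memory levels of sizes $M_1\le\cdots\le M_d$, inverse bandwidths $\beta_1\le\cdots\le\beta_d$ and latencies $\alpha_1\le\cdots\le\alpha_d$. Then the bandwidth cost of $Alg$ is $$\Omega\!\left(\sum_{i=1}^{d-1}\beta_i\left(\frac{n^3}{\sqrt{M_i}}-M_i\right)\right)$$ and the latency cost of $Alg$ is $$\Omega\!\left(\sum_{i=1}^{d-1}\alpha_i\,\frac{n^3}{M_i^{3/2}}\right).$$
   Context: The Cholesky decomposition of a real symmetric positive definite matrix $A$ is $A = LL^T$ with $L$ lower triangular; its entries satisfy $L(i,i)=\sqrt{A(i,i)-\sum_{k=1}^{i-1}L(i,k)^2}$ and $L(i,j)=\frac{1}{L(j,j)}\big(A(i,j)-\sum_{k=1}^{j-1}L(i,k)L(j,k)\big)$ for $i>j$. A "classical" Cholesky algorithm performs exactly these arithmetic operations, possibly reordered using only associativity and commutativity of addition (no pivoting, no distributivity). Hierarchical memory model: a sequential machine with $d$ levels of memory, level $i$ of size $M_i$ words; moving a message of $w$ contiguous words between level $i$ and the next slower level costs $\alpha_i+\beta_i w$. The input matrix initially resides in the slowest level. Bandwidth cost here is the sum over levels of $\beta_i$ times the number of words moved across that level boundary, and latency cost the sum over levels of $\alpha_i$ times the number of messages moved across that boundary. *)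

theory Defs
  imports Complex_Main "HOL-Library.Multiset"
begin

text \<open>Values handled by the machine are symbolic expressions over the input
entries A(i,j) (stored only for j \<le> i, A being symmetric).\<close>

datatype sexp =
    Var nat nat
  | Plus sexp sexp
  | Minus sexp sexp
  | Times sexp sexp
  | Divide sexp sexp
  | Sqroot sexp

fun is_var :: "sexp \<Rightarrow> bool" where
  "is_var (Var _ _) = True"
| "is_var _ = False"

fun subterms :: "sexp \<Rightarrow> sexp set" where
  "subterms (Var i j) = {Var i j}"
| "subterms (Plus a b) = insert (Plus a b) (subterms a \<union> subterms b)"
| "subterms (Minus a b) = insert (Minus a b) (subterms a \<union> subterms b)"
| "subterms (Times a b) = insert (Times a b) (subterms a \<union> subterms b)"
| "subterms (Divide a b) = insert (Divide a b) (subterms a \<union> subterms b)"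
| "subterms (Sqroot a) = insert (Sqroot a) (subterms a)"

text \<open>Flattening of a sum/difference tree into the multiset of its signed summands
(True = added, False = subtracted). Two expressions have the same flattening iff
they differ only by reordering/rebracketing the additions (associativity and
commutativity of addition).\<close>

fun flat :: "sexp \<Rightarrow> (bool \<times> sexp) multiset" where
  "flat (Plus a b) = flat a + flat b"
| "flat (Minus a b) = flat a + image_mset (\<lambda>(s, t). (\<not> s, t)) (flat b)"
| "flat e = {#(True, e)#}"

text \<open>Lf i j is the symbolic expression by which the algorithm computes L(i,j)
(0-based indices, j \<le> i < n). It must follow the defining formulas, with the
sums possibly reordered by associativity/commutativity of addition.\<close>

definition chol_form :: "nat \<Rightarrow> (nat \<Rightarrow> nat \<Rightarrow> sexp) \<Rightarrow> bool" where
  "chol_form n Lf \<longleftrightarrow>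
     (\<forall>i<n. \<exists>s. Lf i i = Sqroot s \<and>
        flat s = {#(True, Var i i)#} +
                 image_mset (\<lambda>k. (False, Times (Lf i k) (Lf i k))) (mset [0..<i])) \<and>
     (\<forall>i<n. \<forall>j<i. \<exists>s ps. Lf i j = Divide s (Lf j j) \<and>
        (\<forall>k<j. ps k \<in> {Times (Lf i k) (Lf j k), Times (Lf j k) (Lf i k)}) \<and>
        flat s = {#(True, Var i j)#} + image_mset (\<lambda>k. (False, ps k)) (mset [0..<j]))"

definition chol_ops :: "nat \<Rightarrow> (nat \<Rightarrow> nat \<Rightarrow> sexp) \<Rightarrow> sexp set" where
  "chol_ops n Lf = (\<Union>i<n. \<Union>j\<le>i. subterms (Lf i j)) - {e. is_var e}"

definition classical_chol :: "nat \<Rightarrow> sexp list \<Rightarrow> bool" where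
  "classical_chol n rs \<longleftrightarrow> (\<exists>Lf. chol_form n Lf \<and> distinct rs \<and> set rs = chol_ops n Lf)"

text \<open>Levels 1..d (1 fastest); level l has word positions 0..<M l.
A state maps level and position to the stored value (None = empty).\<close>

type_synonym state = "nat \<Rightarrow> nat \<Rightarrow> sexp option"

datatype opc = OAdd | OSub | OMul | ODiv | OSqrt

fun apply_op :: "opc \<Rightarrow> sexp \<Rightarrow> sexp \<Rightarrow> sexp" where
  "apply_op OAdd a b = Plus a b"
| "apply_op OSub a b = Minus a b"
| "apply_op OMul a b = Times a b"
| "apply_op ODiv a b = Divide a b"
| "apply_op OSqrt a b = Sqroot a"

text \<open>Instructions:
  Xfer st l a b w : message of w contiguous words between level l and level l+1;
    if st (store) from positions a..<a+w of level l to positions b..<b+w of level l+1,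
    otherwise (fetch) from positions a..<a+w of level l+1 to b..<b+w of level l.
  Op f x y z : arithmetic in the fastest level 1: position x := f(pos y, pos z)
    (z is ignored for OSqrt).\<close>

datatype instr = Xfer bool nat nat nat nat | Op opc nat nat nat

fun step :: "nat \<Rightarrow> (nat \<Rightarrow> nat) \<Rightarrow> state \<Rightarrow> instr \<Rightarrow> state option" where
  "step d M \<sigma> (Xfer st l a b w) =
     (let src = (if st then l else l + 1); dst = (if st then l + 1 else l) in
      if 1 \<le> l \<and> l < d \<and> a + w \<le> M src \<and> b + w \<le> M dst \<and> (\<forall>t<w. \<sigma> src (a + t) \<noteq> None)
      then Some (\<sigma>(dst := (\<lambda>p. if b \<le> p \<and> p < b + w then \<sigma> src (a + (p - b)) else \<sigma> dst p)))
      else None)"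
| "step d M \<sigma> (Op f x y z) =
     (if 1 \<le> d \<and> x < M 1 \<and> y < M 1 \<and> z < M 1 \<and> \<sigma> 1 y \<noteq> None \<and> (f = OSqrt \<or> \<sigma> 1 z \<noteq> None)
      then Some (\<sigma>(1 := (\<sigma> 1)(x := Some (apply_op f (the (\<sigma> 1 y)) (the (\<sigma> 1 z))))))
      else None)"

fun op_result :: "state \<Rightarrow> instr \<Rightarrow> sexp list" where
  "op_result \<sigma> (Op f x y z) = [apply_op f (the (\<sigma> 1 y)) (the (\<sigma> 1 z))]"
| "op_result \<sigma> (Xfer _ _ _ _ _) = []"

fun run :: "nat \<Rightarrow> (nat \<Rightarrow> nat) \<Rightarrow> state \<Rightarrow> instr list \<Rightarrow> (state \<times> sexp list) option" where
  "run d M \<sigma> [] = Some (\<sigma>, [])"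
| "run d M \<sigma> (c # cs) =
     (case step d M \<sigma> c of
        None \<Rightarrow> None
      | Some \<sigma>' \<Rightarrow> (case run d M \<sigma>' cs of
                     None \<Rightarrow> None
                   | Some (\<tau>, rs) \<Rightarrow> Some (\<tau>, op_result \<sigma> c @ rs)))"

definition init_state :: "nat \<Rightarrow> (nat \<Rightarrow> nat) \<Rightarrow> nat \<Rightarrow> state \<Rightarrow> bool" where
  "init_state d M n \<sigma> \<longleftrightarrow>
     (\<forall>l. l \<noteq> d \<longrightarrow> (\<forall>p. \<sigma> l p = None)) \<and>
     (\<forall>p. \<sigma> d p \<noteq> None \<longrightarrow> p < M d \<and> (\<exists>i j. j \<le> i \<and> i < n \<and> \<sigma> d p = Some (Var i j))) \<and>
     (\<forall>i<n. \<forall>j\<le>i. \<exists>p<M d. \<sigma> d p = Some (Var i j))"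

definition classical_cholesky_alg :: "nat \<Rightarrow> (nat \<Rightarrow> nat) \<Rightarrow> nat \<Rightarrow> state \<Rightarrow> instr list \<Rightarrow> bool" where
  "classical_cholesky_alg d M n \<sigma>0 prog \<longleftrightarrow>
     init_state d M n \<sigma>0 \<and>
     (\<exists>\<tau> rs. run d M \<sigma>0 prog = Some (\<tau>, rs) \<and> classical_chol n rs)"

fun bw_instr :: "(nat \<Rightarrow> real) \<Rightarrow> instr \<Rightarrow> real" where
  "bw_instr \<beta> (Xfer _ l _ _ w) = \<beta> l * real w"
| "bw_instr \<beta> (Op _ _ _ _) = 0"

fun lat_instr :: "(nat \<Rightarrow> real) \<Rightarrow> instr \<Rightarrow> real" where
  "lat_instr \<alpha> (Xfer _ l _ _ _) = \<alpha> l"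
| "lat_instr \<alpha> (Op _ _ _ _) = 0"

definition bandwidth_cost :: "(nat \<Rightarrow> real) \<Rightarrow> instr list \<Rightarrow> real" where
  "bandwidth_cost \<beta> prog = sum_list (map (bw_instr \<beta>) prog)"

definition latency_cost :: "(nat \<Rightarrow> real) \<Rightarrow> instr list \<Rightarrow> real" where
  "latency_cost \<alpha> prog = sum_list (map (lat_instr \<alpha>) prog)"

end

theory Submission
  imports Defs
begin

text \<open>
  Fix a boundary b between levels b and b+1 and regard levels 1..b, of total size F \<le> b M_b,
  as one fast memory. Cut the run into segments moving about 2F words each across the boundary.
  If some node of the computation of an entry L(i,j) is evaluated inside a segment, one of the
  nodes of that entry is in fast memory at the start or at the end of the segment or crosses the
  boundary during it; the nodes of distinct entries are distinct values, so a segment touches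
  O(F) entries. Each multiplication L(i,k) L(j,k) of the segment involves the touched entries
  (i,k) and (j,k), and either (i,j) is touched or the product itself leaves the segment; counting
  triangles in the graph of touched entries bounds the multiplications per segment by O(F^(3/2)).
  As there are about n^3/6 multiplications, about n^3/sqrt F words cross boundary b, and since a
  message carries at most M_b words the latency bound follows.
\<close>

section \<open>Counting triangles\<close>

lemma card_low_degree_wedges:
  fixes A :: "('a \<times> 'a) set" and s :: real
  assumes "finite A" and "0 \<le> s"
  shows "real (card {(i,j,k). (i,j) \<in> A \<and> (i,k) \<in> A \<and> real (card (A `` {i})) \<le> s})
           \<le> real (card A) * s"
proof -
  let ?P = "{p \<in> A. real (card (A `` {fst p})) \<le> s}"
  have fin: "finite (SIGMA p:?P. A `` {fst p})" using assms by (auto intro: finite_Image)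
  have "{(i,j,k). (i,j) \<in> A \<and> (i,k) \<in> A \<and> real (card (A `` {i})) \<le> s}
        = (\<lambda>(p,k). (fst p, snd p, k)) ` (SIGMA p:?P. A `` {fst p})"
    by (auto simp: image_iff)
  then have "card {(i,j,k). (i,j) \<in> A \<and> (i,k) \<in> A \<and> real (card (A `` {i})) \<le> s}
        \<le> card (SIGMA p:?P. A `` {fst p})"
    using card_image_le[OF fin] by simp
  also have "\<dots> = (\<Sum>p\<in>?P. card (A `` {fst p}))"
    using assms by (intro card_SigmaI) (auto intro: finite_Image)
  finally have "real (card {(i,j,k). (i,j) \<in> A \<and> (i,k) \<in> A \<and> real (card (A `` {i})) \<le> s})
        \<le> (\<Sum>p\<in>?P. real (card (A `` {fst p})))"
    by (simp flip: of_nat_sum)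
  also have "\<dots> \<le> real (card ?P) * s" using sum_mono[of ?P _ "\<lambda>_. s"] by simp
  also have "\<dots> \<le> real (card A) * s" using assms by (intro mult_right_mono) (auto intro: card_mono)
  finally show ?thesis .
qed

lemma card_high_degree_vertices:
  fixes A :: "('a \<times> 'a) set" and s :: real
  assumes "finite A"
  shows "real (card {i \<in> Domain A. s < real (card (A `` {i}))}) * s \<le> real (card A)"
proof -
  let ?H = "{i \<in> Domain A. s < real (card (A `` {i}))}"
  have fin: "finite ?H" using assms by (simp add: finite_Domain)
  have "real (card ?H) * s \<le> (\<Sum>i\<in>?H. real (card (A `` {i})))"
    using sum_mono[of ?H "\<lambda>_. s"] by fastforce
  also have "\<dots> = real (card (SIGMA i:?H. A `` {i}))"
    using fin assms by (simp add: card_SigmaI finite_Image)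
  also have "\<dots> \<le> real (card A)"
    using assms by (intro of_nat_mono card_mono) auto
  finally show ?thesis .
qed

lemma card_triangles_le:
  fixes A :: "('a \<times> 'a) set" and s :: real
  assumes A: "finite A" and s: "0 < s"
  shows "real (card {(i,j,k). (i,j) \<in> A \<and> (i,k) \<in> A \<and> (j,k) \<in> A})
           \<le> real (card A) * s + real (card A)^2 / s"
proof -
  define H where "H = {i \<in> Domain A. s < real (card (A `` {i}))}"
  let ?low = "{(i,j,k). (i,j) \<in> A \<and> (i,k) \<in> A \<and> real (card (A `` {i})) \<le> s}"
  have fH: "finite H" unfolding H_def using A by (simp add: finite_Domain)
  have "?low \<subseteq> Domain A \<times> Range A \<times> Range A" by (auto intro: Domain.intros Range.intros)
  moreover have "finite (Domain A \<times> Range A \<times> Range A)" using A by (simp add: finite_Domain finite_Range)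
  ultimately have fin_low: "finite ?low" by (rule finite_subset)
  have "{(i,j,k). (i,j) \<in> A \<and> (i,k) \<in> A \<and> (j,k) \<in> A} \<subseteq> ?low \<union> H \<times> A"
    unfolding H_def by (auto intro: Domain.intros)
  then have "card {(i,j,k). (i,j) \<in> A \<and> (i,k) \<in> A \<and> (j,k) \<in> A} \<le> card (?low \<union> H \<times> A)"
    using fin_low fH A by (intro card_mono) auto
  also have "\<dots> \<le> card ?low + card H * card A"
    using card_Un_le[of ?low "H \<times> A"] by (simp add: card_cartesian_product)
  finally have "card {(i,j,k). (i,j) \<in> A \<and> (i,k) \<in> A \<and> (j,k) \<in> A} \<le> card ?low + card H * card A" .
  then have "real (card {(i,j,k). (i,j) \<in> A \<and> (i,k) \<in> A \<and> (j,k) \<in> A})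
      \<le> real (card ?low) + real (card H) * real (card A)"
    by (simp flip: of_nat_mult of_nat_add)
  moreover have "real (card ?low) \<le> real (card A) * s" using card_low_degree_wedges[OF A] s by simp
  moreover have "real (card H) \<le> real (card A) / s"
    using card_high_degree_vertices[OF A, of s] s unfolding H_def by (simp add: pos_le_divide_eq)
  then have "real (card H) * real (card A) \<le> real (card A)^2 / s"
    by (auto dest: mult_right_mono[of _ _ "real (card A)"] simp: power2_eq_square)
  ultimately show ?thesis by linarith
qed

lemma card_triangles_le_sqrt:
  fixes A :: "('a \<times> 'a) set" and x :: real
  assumes A: "finite A" and x: "real (card A) \<le> x"
  shows "real (card {(i,j,k). (i,j) \<in> A \<and> (i,k) \<in> A \<and> (j,k) \<in> A}) \<le> 2 * x * sqrt x"
proof (cases "A = {}")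
  case True
  then have "{(i,j,k). (i,j) \<in> A \<and> (i,k) \<in> A \<and> (j,k) \<in> A} = {}" by auto
  then have "real (card {(i,j,k). (i,j) \<in> A \<and> (i,k) \<in> A \<and> (j,k) \<in> A}) = 0" by (simp only: card.empty of_nat_0)
  moreover have "0 \<le> x" using x True by simp
  ultimately show ?thesis by simp
next
  case False
  then have "0 < x" using A x card_gt_0_iff[of A] by linarith
  then have sx: "0 < sqrt x" "sqrt x * sqrt x = x" by simp_all
  have "real (card A) * sqrt x \<le> x * sqrt x" using x sx by (simp add: mult_right_mono)
  moreover have "real (card A)^2 / sqrt x \<le> x^2 / sqrt x"
    using x sx by (intro divide_right_mono power_mono) simp_all
  moreover have "x^2 / sqrt x = x * sqrt x" using sx by (simp add: field_simps power2_eq_square)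
  ultimately show ?thesis using card_triangles_le[OF A sx(1)] by linarith
qed

lemma cube_over_sqrt_le:
  fixes n F W :: real
  assumes F: "1 \<le> F" and n: "0 \<le> n" and quadratic: "n^2 / 2 \<le> W"
    and cubic: "6 \<le> n \<Longrightarrow> n^3 \<le> 8424 * sqrt F * (W + F)"
  shows "n^3 / sqrt F \<le> 16848 * W"
proof -
  have sF: "1 \<le> sqrt F" using F by simp
  have W: "0 \<le> W" using quadratic zero_le_power2[of n] by linarith
  consider "n < 6" | "6 \<le> n" "2 * F \<le> n^3 / (8424 * sqrt F)" | "6 \<le> n" "n^3 / (8424 * sqrt F) < 2 * F"
    by linarith
  then show ?thesis
  proof cases
    case 1
    have "n^3 / sqrt F \<le> n^3" using sF n by (simp add: divide_le_eq mult_le_cancel_left1)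
    also have "\<dots> = n * n^2" by (simp add: power2_eq_square power3_eq_cube)
    also have "\<dots> \<le> 6 * n^2" using 1 by (intro mult_right_mono) auto
    finally show ?thesis using quadratic W by linarith
  next
    case 2
    have "n^3 / (8424 * sqrt F) \<le> W + F" using cubic[OF 2(1)] sF by (simp add: divide_le_eq mult.commute)
    then show ?thesis using 2(2) sF by (simp add: field_simps)
  next
    case 3
    define x where "x = n / sqrt F"
    have "sqrt F * sqrt F = F" using F by simp
    then have "x^3 = n^3 / (sqrt F * F)" unfolding x_def by (simp add: power_divide power3_eq_cube)
    also have "\<dots> < 16848" using 3(2) sF F by (simp add: field_simps)
    finally have "x^3 < 27^3" by simp
    then have "x < 27" by (rule power_less_imp_less_base) simp
    have "n^3 / sqrt F = n^2 * x" unfolding x_def by (simp add: power2_eq_square power3_eq_cube)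
    also have "\<dots> \<le> n^2 * 27" using \<open>x < 27\<close> by (intro mult_left_mono) auto
    finally show ?thesis using quadratic W by linarith
  qed
qed

section \<open>Summation trees\<close>

fun sum_nodes :: "sexp \<Rightarrow> sexp set" where
  "sum_nodes (Plus a b) = insert (Plus a b) (sum_nodes a \<union> sum_nodes b)"
| "sum_nodes (Minus a b) = insert (Minus a b) (sum_nodes a \<union> sum_nodes b)"
| "sum_nodes e = {e}"

definition summands :: "sexp \<Rightarrow> sexp set" where "summands s = snd ` set_mset (flat s)"

fun operands :: "sexp \<Rightarrow> sexp set" where
  "operands (Var i j) = {}"
| "operands (Plus a b) = {a,b}"
| "operands (Minus a b) = {a,b}"
| "operands (Times a b) = {a,b}"
| "operands (Divide a b) = {a,b}"
| "operands (Sqroot a) = {a}"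

fun is_sum :: "sexp \<Rightarrow> bool" where
  "is_sum (Plus _ _) = True" | "is_sum (Minus _ _) = True" | "is_sum _ = False"

fun is_times :: "sexp \<Rightarrow> bool" where
  "is_times (Times _ _) = True" | "is_times _ = False"

lemma summands_Plus[simp]: "summands (Plus a b) = summands a \<union> summands b"
  by (auto simp: summands_def)
lemma summands_Minus[simp]: "summands (Minus a b) = summands a \<union> summands b"
  by (force simp: summands_def image_iff)
lemma summands_not_sum: "\<not> is_sum e \<Longrightarrow> summands e = {e}"
  by (cases e) (auto simp: summands_def)

lemma sum_nodes_summands: "x \<in> sum_nodes s \<Longrightarrow> summands x \<subseteq> summands s"
  by (induction s) auto
lemma sum_nodes_not_sum: "x \<in> sum_nodes s \<Longrightarrow> \<not> is_sum x \<Longrightarrow> x \<in> summands s"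
  by (induction s) (auto simp: summands_not_sum)
lemma summands_sum_nodes: "summands s \<subseteq> sum_nodes s"
  by (induction s) (auto simp: summands_not_sum)
lemma subterms_self: "e \<in> subterms e"
  by (cases e) auto
lemma sum_nodes_subterms: "sum_nodes s \<subseteq> subterms s"
  by (induction s) (auto simp: subterms_self)
lemma sum_nodes_self: "s \<in> sum_nodes s"
  by (cases s) auto
lemma sum_nodes_parent: "x \<in> sum_nodes s \<Longrightarrow> x \<noteq> s \<Longrightarrow> \<exists>y\<in>sum_nodes s. is_sum y \<and> x \<in> operands y"
  by (induction s) (auto simp: sum_nodes_self)
lemma sum_nodes_operand: "y \<in> sum_nodes s \<Longrightarrow> is_sum y \<Longrightarrow> c \<in> operands y \<Longrightarrow> c \<in> sum_nodes s"
  by (induction s) (auto simp: sum_nodes_self elim: is_sum.elims)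
lemma summands_sum_operand: "is_sum y \<Longrightarrow> v \<in> summands y \<Longrightarrow> \<exists>c \<in> operands y. v \<in> summands c"
  by (cases y) auto
lemma summands_nonempty: "summands x \<noteq> {}"
  by (induction x) (auto simp: summands_def)
lemma size_operands: "c \<in> operands y \<Longrightarrow> size c < size y"
  by (cases y) auto
lemma finite_sum_nodes: "finite (sum_nodes s)"
  by (induction s) auto
lemma sum_nodes_cases: "x \<in> sum_nodes s \<Longrightarrow> is_sum x \<or> x \<in> summands s"
  using sum_nodes_not_sum by blast

definition sum_arg :: "sexp \<Rightarrow> sexp" where
  "sum_arg e = (case e of Sqroot s \<Rightarrow> s | Divide s _ \<Rightarrow> s | _ \<Rightarrow> e)"

section \<open>Classical Cholesky computations\<close>

locale chol_comp = fixes n :: nat and Lf :: "nat \<Rightarrow> nat \<Rightarrow> sexp"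
  assumes form: "chol_form n Lf"
begin

definition Lsum :: "nat \<Rightarrow> nat \<Rightarrow> sexp" where "Lsum i j = sum_arg (Lf i j)"

lemma Lsum_diag: "i < n \<Longrightarrow> Lf i i = Sqroot (Lsum i i) \<and>
   flat (Lsum i i) = {#(True, Var i i)#} + image_mset (\<lambda>k. (False, Times (Lf i k) (Lf i k))) (mset [0..<i])"
  using form unfolding chol_form_def Lsum_def sum_arg_def by force

lemma Lsum_offdiag: "j < i \<Longrightarrow> i < n \<Longrightarrow> Lf i j = Divide (Lsum i j) (Lf j j) \<and> (\<exists>ps.
        (\<forall>k<j. ps k \<in> {Times (Lf i k) (Lf j k), Times (Lf j k) (Lf i k)}) \<and>
        flat (Lsum i j) = {#(True, Var i j)#} + image_mset (\<lambda>k. (False, ps k)) (mset [0..<j]))"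
proof -
  assume a: "j < i" "i < n"
  then obtain s' ps where "Lf i j = Divide s' (Lf j j)" "(\<forall>k<j. ps k \<in> {Times (Lf i k) (Lf j k), Times (Lf j k) (Lf i k)})"
     "flat s' = {#(True, Var i j)#} + image_mset (\<lambda>k. (False, ps k)) (mset [0..<j])"
    using form unfolding chol_form_def by blast
  then show ?thesis unfolding Lsum_def sum_arg_def by auto
qed

lemma Var_summand: "j \<le> i \<Longrightarrow> i < n \<Longrightarrow> Var i j \<in> summands (Lsum i j)"
proof (cases "j = i")
  case True
  assume "i < n" then show ?thesis using Lsum_diag True by (force simp: summands_def)
next
  case False
  assume "j \<le> i" "i < n"
  then show ?thesis using Lsum_offdiag[of j i] False by (force simp: summands_def)
qed

lemma summands_Lsum: "j \<le> i \<Longrightarrow> i < n \<Longrightarrow> x \<in> summands (Lsum i j) \<Longrightarrow>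
   x = Var i j \<or> (\<exists>k<j. x = Times (Lf i k) (Lf j k) \<or> x = Times (Lf j k) (Lf i k))"
proof (cases "j = i")
  case True
  assume "i < n" "x \<in> summands (Lsum i j)" then show ?thesis using Lsum_diag[of i] True by (auto simp: summands_def)
next
  case False
  assume a: "j \<le> i" "i < n" "x \<in> summands (Lsum i j)"
  obtain ps where ps: "(\<forall>k<j. ps k \<in> {Times (Lf i k) (Lf j k), Times (Lf j k) (Lf i k)})"
        "flat (Lsum i j) = {#(True, Var i j)#} + image_mset (\<lambda>k. (False, ps k)) (mset [0..<j])"
    using Lsum_offdiag[of j i] a False by auto
  have "x = Var i j \<or> (\<exists>k<j. x = ps k)" using a(3) ps(2) by (auto simp: summands_def)
  then show ?thesis using ps(1) by blast
qed

lemma Lsum_shape: "j \<le> i \<Longrightarrow> i < n \<Longrightarrow> is_sum (Lsum i j) \<or> Lsum i j = Var i j"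
  using Var_summand summands_not_sum by fastforce

lemma Lf_shape: "j \<le> i \<Longrightarrow> i < n \<Longrightarrow> Lf i j = Sqroot (Lsum i j) \<or> Lf i j = Divide (Lsum i j) (Lf j j)"
  using Lsum_diag Lsum_offdiag by (cases "j = i") auto

lemma Lf_inj: "j \<le> i \<Longrightarrow> i < n \<Longrightarrow> j' \<le> i' \<Longrightarrow> i' < n \<Longrightarrow> Lf i j = Lf i' j' \<Longrightarrow> i = i' \<and> j = j'"
proof -
  assume a: "j \<le> i" "i < n" "j' \<le> i'" "i' < n" "Lf i j = Lf i' j'"
  have "Lsum i j = Lsum i' j'" using a(5) unfolding Lsum_def by simp
  then have "Var i j \<in> summands (Lsum i' j')" using Var_summand a by metis
  then show ?thesis using summands_Lsum[OF a(3,4)] by auto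
qed

definition Lmul :: "nat \<Rightarrow> nat \<Rightarrow> nat \<Rightarrow> sexp" where
  "Lmul i j k = (if Times (Lf i k) (Lf j k) \<in> summands (Lsum i j) then Times (Lf i k) (Lf j k) else Times (Lf j k) (Lf i k))"

lemma Lmul_summand: "k < j \<Longrightarrow> j < i \<Longrightarrow> i < n \<Longrightarrow> Lmul i j k \<in> summands (Lsum i j)"
proof -
  assume a: "k < j" "j < i" "i < n"
  obtain ps where ps: "(\<forall>k<j. ps k \<in> {Times (Lf i k) (Lf j k), Times (Lf j k) (Lf i k)})"
        "flat (Lsum i j) = {#(True, Var i j)#} + image_mset (\<lambda>k. (False, ps k)) (mset [0..<j])"
    using Lsum_offdiag[of j i] a by blast
  have "ps k \<in> summands (Lsum i j)" using ps(2) a(1) by (force simp: summands_def)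
  then show ?thesis using ps(1) a(1) unfolding Lmul_def by auto
qed

lemma operands_Lmul: "operands (Lmul i j k) = {Lf i k, Lf j k}"
  unfolding Lmul_def by auto

definition entry_nodes :: "nat \<Rightarrow> nat \<Rightarrow> sexp set" where
  "entry_nodes i j = insert (Lf i j) {x \<in> sum_nodes (Lsum i j). \<not> is_times x}"

lemma Times_Lf_eq: "j \<le> i \<Longrightarrow> i < n \<Longrightarrow> j' \<le> i' \<Longrightarrow> i' < n \<Longrightarrow> k < j \<Longrightarrow> k' < j' \<Longrightarrow>
   Times (Lf a k) (Lf b k) = Times (Lf a' k') (Lf b' k') \<Longrightarrow> {a,b} = {i,j} \<Longrightarrow> {a',b'} = {i',j'} \<Longrightarrow> i = i' \<and> j = j'"
proof -
  assume a: "j \<le> i" "i < n" "j' \<le> i'" "i' < n" "k < j" "k' < j'"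
    "Times (Lf a k) (Lf b k) = Times (Lf a' k') (Lf b' k')" "{a,b} = {i,j}" "{a',b'} = {i',j'}"
  have r: "a \<in> {i,j}" "b \<in> {i,j}" "a' \<in> {i',j'}" "b' \<in> {i',j'}" using a(8,9) by auto
  have "k \<le> a" "a < n" "k \<le> b" "b < n" "k' \<le> a'" "a' < n" "k' \<le> b'" "b' < n" using r a by auto
  then have "a = a'" "b = b'" using Lf_inj a(7) by auto
  then have "{i,j} = {i',j'}" using a(8,9) by simp
  then show ?thesis using a(1,3) by (metis doubleton_eq_iff le_antisym)
qed

lemma summand_unique: "j \<le> i \<Longrightarrow> i < n \<Longrightarrow> j' \<le> i' \<Longrightarrow> i' < n \<Longrightarrow> x \<in> summands (Lsum i j) \<Longrightarrow> x \<in> summands (Lsum i' j') \<Longrightarrow> i = i' \<and> j = j'"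
proof -
  assume a: "j \<le> i" "i < n" "j' \<le> i'" "i' < n" "x \<in> summands (Lsum i j)" "x \<in> summands (Lsum i' j')"
  from summands_Lsum[OF a(1,2,5)] summands_Lsum[OF a(3,4,6)] show ?thesis
  proof (elim disjE exE conjE)
    fix k k' assume "k < j" "k' < j'" "x = Times (Lf i k) (Lf j k)" "x = Times (Lf i' k') (Lf j' k')"
    then show ?thesis using Times_Lf_eq[OF a(1-4), of k k' i j i' j'] by auto
  next
    fix k k' assume "k < j" "k' < j'" "x = Times (Lf j k) (Lf i k)" "x = Times (Lf i' k') (Lf j' k')"
    then show ?thesis using Times_Lf_eq[OF a(1-4), of k k' j i i' j'] by auto
  next
    fix k k' assume "k < j" "k' < j'" "x = Times (Lf i k) (Lf j k)" "x = Times (Lf j' k') (Lf i' k')"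
    then show ?thesis using Times_Lf_eq[OF a(1-4), of k k' i j j' i'] by auto
  next
    fix k k' assume "k < j" "k' < j'" "x = Times (Lf j k) (Lf i k)" "x = Times (Lf j' k') (Lf i' k')"
    then show ?thesis using Times_Lf_eq[OF a(1-4), of k k' j i j' i'] by auto
  qed auto
qed

lemma Lf_notin_sum_nodes: "j \<le> i \<Longrightarrow> i < n \<Longrightarrow> j' \<le> i' \<Longrightarrow> i' < n \<Longrightarrow> Lf i' j' \<notin> sum_nodes (Lsum i j)"
proof
  assume b: "j \<le> i" "i < n" "j' \<le> i'" "i' < n" "Lf i' j' \<in> sum_nodes (Lsum i j)"
  have "is_sum (Lf i' j') \<or> Lf i' j' \<in> summands (Lsum i j)" using sum_nodes_cases b(5) .
  moreover have "\<not> is_sum (Lf i' j')" using Lf_shape[OF b(3,4)] by auto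
  ultimately have "Lf i' j' \<in> summands (Lsum i j)" by simp
  from summands_Lsum[OF b(1,2) this] show False using Lf_shape[OF b(3,4)] by auto
qed

lemma entry_nodes_disjoint: "j \<le> i \<Longrightarrow> i < n \<Longrightarrow> j' \<le> i' \<Longrightarrow> i' < n \<Longrightarrow> x \<in> entry_nodes i j \<Longrightarrow> x \<in> entry_nodes i' j' \<Longrightarrow> i = i' \<and> j = j'"
proof -
  assume a: "j \<le> i" "i < n" "j' \<le> i'" "i' < n" "x \<in> entry_nodes i j" "x \<in> entry_nodes i' j'"
  show ?thesis
  proof (cases "x = Lf i j")
    case True
    then show ?thesis using a Lf_inj Lf_notin_sum_nodes unfolding entry_nodes_def by blast
  next
    case False
    then have x: "x \<in> sum_nodes (Lsum i j)" using a(5) unfolding entry_nodes_def by auto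
    show ?thesis
    proof (cases "x = Lf i' j'")
      case True then show ?thesis using x Lf_notin_sum_nodes a by blast
    next
      case False
      then have x': "x \<in> sum_nodes (Lsum i' j')" using a(6) unfolding entry_nodes_def by auto
      obtain l where "l \<in> summands x" using summands_nonempty by blast
      then have "l \<in> summands (Lsum i j)" "l \<in> summands (Lsum i' j')" using sum_nodes_summands x x' by blast+
      then show ?thesis using summand_unique a by blast
    qed
  qed
qed

lemma Lmul_inj: "k < j \<Longrightarrow> j < i \<Longrightarrow> i < n \<Longrightarrow> k' < j' \<Longrightarrow> j' < i' \<Longrightarrow> i' < n \<Longrightarrow>
  Lmul i j k = Lmul i' j' k' \<Longrightarrow> i = i' \<and> j = j' \<and> k = k'"
proof -
  assume a: "k < j" "j < i" "i < n" "k' < j'" "j' < i'" "i' < n" "Lmul i j k = Lmul i' j' k'"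
  have "Lmul i j k \<in> summands (Lsum i j)" "Lmul i' j' k' \<in> summands (Lsum i' j')" using Lmul_summand a by blast+
  then have ij: "i = i' \<and> j = j'" using summand_unique[of j i j' i'] a(2,3,5,6,7) by auto
  have "Lf i k = Lf i k' \<or> Lf i k = Lf j k'" using a(7) ij unfolding Lmul_def by (auto split: if_splits)
  moreover have "Lf i k = Lf i k' \<Longrightarrow> k = k'" using Lf_inj[of k i k' i] a ij by auto
  moreover have "Lf i k = Lf j k' \<Longrightarrow> k = k'" using Lf_inj[of k i k' j] a ij by auto
  ultimately show ?thesis using ij by blast
qed

lemma Lf_entry_nodes: "Lf i j \<in> entry_nodes i j" unfolding entry_nodes_def by simp

lemma finite_entry_nodes: "finite (entry_nodes i j)" unfolding entry_nodes_def using finite_sum_nodes by auto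

lemma Lsum_operand: "j \<le> i \<Longrightarrow> i < n \<Longrightarrow> Lsum i j \<in> operands (Lf i j)"
  using Lf_shape[of j i] by auto

lemma Lsum_entry_nodes: "j \<le> i \<Longrightarrow> i < n \<Longrightarrow> Lsum i j \<in> entry_nodes i j"
proof -
  assume a: "j \<le> i" "i < n"
  have "\<not> is_times (Lsum i j)" using Lsum_shape[OF a] by (cases "Lsum i j") auto
  then show ?thesis using sum_nodes_self unfolding entry_nodes_def by blast
qed

lemma entry_nodes_parent: "j \<le> i \<Longrightarrow> i < n \<Longrightarrow> x \<in> entry_nodes i j \<Longrightarrow> x \<noteq> Lf i j \<Longrightarrow> \<exists>y \<in> entry_nodes i j. x \<in> operands y"
proof -
  assume a: "j \<le> i" "i < n" "x \<in> entry_nodes i j" "x \<noteq> Lf i j"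
  then have x: "x \<in> sum_nodes (Lsum i j)" unfolding entry_nodes_def by auto
  show ?thesis
  proof (cases "x = Lsum i j")
    case True then show ?thesis using Lsum_operand[OF a(1,2)] Lf_entry_nodes by blast
  next
    case False
    then obtain y where y: "y \<in> sum_nodes (Lsum i j)" "is_sum y" "x \<in> operands y" using sum_nodes_parent x by blast
    have "\<not> is_times y" using y(2) by (cases y) auto
    then show ?thesis using y unfolding entry_nodes_def by blast
  qed
qed

lemma summand_parent: "j \<le> i \<Longrightarrow> i < n \<Longrightarrow> x \<in> summands (Lsum i j) \<Longrightarrow> \<exists>y \<in> entry_nodes i j. x \<in> operands y"
proof -
  assume a: "j \<le> i" "i < n" "x \<in> summands (Lsum i j)"
  then have x: "x \<in> sum_nodes (Lsum i j)" using summands_sum_nodes by blast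
  show ?thesis
  proof (cases "x = Lsum i j")
    case True then show ?thesis using Lsum_operand[OF a(1,2)] Lf_entry_nodes by blast
  next
    case False
    then obtain y where y: "y \<in> sum_nodes (Lsum i j)" "is_sum y" "x \<in> operands y" using sum_nodes_parent x by blast
    have "\<not> is_times y" using y(2) by (cases y) auto
    then show ?thesis using y unfolding entry_nodes_def by blast
  qed
qed

definition var_path :: "nat \<Rightarrow> nat \<Rightarrow> sexp \<Rightarrow> bool" where
  "var_path i j y \<longleftrightarrow> y = Lf i j \<or> Var i j \<in> summands y"

lemma var_path_operand: "j \<le> i \<Longrightarrow> i < n \<Longrightarrow> y \<in> entry_nodes i j \<Longrightarrow> var_path i j y \<Longrightarrow> y \<noteq> Var i j \<Longrightarrow>
   \<exists>c \<in> operands y. c \<in> entry_nodes i j \<and> var_path i j c"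
proof -
  assume a: "j \<le> i" "i < n" "y \<in> entry_nodes i j" "var_path i j y" "y \<noteq> Var i j"
  show ?thesis
  proof (cases "y = Lf i j")
    case True then show ?thesis using Lsum_operand[OF a(1,2)] Lsum_entry_nodes[OF a(1,2)] Var_summand[OF a(1,2)]
      unfolding var_path_def by blast
  next
    case False
    then have y: "y \<in> sum_nodes (Lsum i j)" "Var i j \<in> summands y" using a(3,4) unfolding entry_nodes_def var_path_def by auto
    have "is_sum y" using y(2) a(5) summands_not_sum by fastforce
    then obtain c where c: "c \<in> operands y" "Var i j \<in> summands c" using summands_sum_operand y(2) by blast
    have "c \<in> sum_nodes (Lsum i j)" using sum_nodes_operand y(1) \<open>is_sum y\<close> c(1) .
    moreover have "\<not> is_times c" using c(2) summands_not_sum by (cases c) auto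
    ultimately show ?thesis using c unfolding entry_nodes_def var_path_def by auto
  qed
qed

lemma sum_nodes_subterms_Lf: "j \<le> i \<Longrightarrow> i < n \<Longrightarrow> sum_nodes (Lsum i j) \<subseteq> subterms (Lf i j)"
proof -
  assume a: "j \<le> i" "i < n"
  have "subterms (Lsum i j) \<subseteq> subterms (Lf i j)" using Lf_shape[OF a] by auto
  then show ?thesis using sum_nodes_subterms by blast
qed

lemma entry_nodes_op: "j \<le> i \<Longrightarrow> i < n \<Longrightarrow> x \<in> entry_nodes i j \<Longrightarrow> \<not> is_var x \<Longrightarrow> x \<in> chol_ops n Lf"
proof -
  assume a: "j \<le> i" "i < n" "x \<in> entry_nodes i j" "\<not> is_var x"
  have "x \<in> subterms (Lf i j)" using a(3) sum_nodes_subterms_Lf[OF a(1,2)] subterms_self unfolding entry_nodes_def by blast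
  then show ?thesis unfolding chol_ops_def using a by blast
qed

lemma Lmul_op: "k < j \<Longrightarrow> j < i \<Longrightarrow> i < n \<Longrightarrow> Lmul i j k \<in> chol_ops n Lf"
proof -
  assume a: "k < j" "j < i" "i < n"
  have "Lmul i j k \<in> subterms (Lf i j)" using Lmul_summand[OF a] summands_sum_nodes sum_nodes_subterms_Lf[of j i] a by auto
  moreover have "\<not> is_var (Lmul i j k)" unfolding Lmul_def by auto
  moreover have "i \<in> {..<n}" "j \<in> {..i}" using a by auto
  ultimately show ?thesis unfolding chol_ops_def by blast
qed

lemma Var_entry_nodes: "j \<le> i \<Longrightarrow> i < n \<Longrightarrow> Var i j \<in> entry_nodes i j"
  using Var_summand summands_sum_nodes unfolding entry_nodes_def by auto

lemma Lmul_parent: "k < j \<Longrightarrow> j < i \<Longrightarrow> i < n \<Longrightarrow> \<exists>y \<in> entry_nodes i j. Lmul i j k \<in> operands y"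
  using Lmul_summand summand_parent by simp

end

section \<open>Machine steps\<close>

definition fast_vals :: "nat \<Rightarrow> state \<Rightarrow> sexp set" where "fast_vals b \<sigma> = {v. \<exists>l p. l \<le> b \<and> \<sigma> l p = Some v}"
definition slow_vals :: "nat \<Rightarrow> state \<Rightarrow> sexp set" where "slow_vals b \<sigma> = {v. \<exists>l p. b < l \<and> \<sigma> l p = Some v}"
definition vals :: "state \<Rightarrow> sexp set" where "vals \<sigma> = {v. \<exists>l p. \<sigma> l p = Some v}"
definition fetched :: "nat \<Rightarrow> state \<Rightarrow> instr \<Rightarrow> sexp set" where
  "fetched b \<sigma> c = (case c of Xfer st l a _ w \<Rightarrow> if \<not> st \<and> l = b then {v. \<exists>q<w. \<sigma> (b+1) (a+q) = Some v} else {} | Op _ _ _ _ \<Rightarrow> {})"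
definition stored :: "nat \<Rightarrow> state \<Rightarrow> instr \<Rightarrow> sexp set" where
  "stored b \<sigma> c = (case c of Xfer st l a _ w \<Rightarrow> if st \<and> l = b then {v. \<exists>q<w. \<sigma> b (a+q) = Some v} else {} | Op _ _ _ _ \<Rightarrow> {})"
definition words :: "nat \<Rightarrow> instr \<Rightarrow> nat" where
  "words b c = (case c of Xfer _ l _ _ w \<Rightarrow> if l = b then w else 0 | Op _ _ _ _ \<Rightarrow> 0)"
definition msgs :: "nat \<Rightarrow> instr \<Rightarrow> nat" where
  "msgs b c = (case c of Xfer _ l _ _ _ \<Rightarrow> if l = b then 1 else 0 | Op _ _ _ _ \<Rightarrow> 0)"

lemma vals_fast_slow: "vals \<sigma> = fast_vals b \<sigma> \<union> slow_vals b \<sigma>"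
  unfolding vals_def fast_vals_def slow_vals_def by (auto, metis not_less)

lemma step_Xfer_cases: "step d M \<sigma> (Xfer st l a b' w) = Some \<sigma>' \<Longrightarrow> \<sigma>' l' p = Some v \<Longrightarrow>
   \<sigma> l' p = Some v \<or> (st \<and> l' = l+1 \<and> (\<exists>q<w. \<sigma> l (a+q) = Some v)) \<or> (\<not>st \<and> l' = l \<and> (\<exists>q<w. \<sigma> (l+1) (a+q) = Some v))"
  by (auto simp: Let_def split: if_splits) (rule_tac x="p-b'" in exI, simp)+

lemma step_Xfer_valid: "step d M \<sigma> (Xfer st l a b' w) = Some \<sigma>' \<Longrightarrow> 1 \<le> l \<and> l < d \<and> w \<le> M l \<and> w \<le> M (l+1)"
  by (auto simp: Let_def split: if_splits)

lemma step_Op_valid: "step d M \<sigma> (Op f x y z) = Some \<sigma>' \<Longrightarrow> 1 \<le> d \<and> 1 \<le> M 1 \<and> \<sigma>' = \<sigma>(1 := (\<sigma> 1)(x := Some (apply_op f (the (\<sigma> 1 y)) (the (\<sigma> 1 z))))) \<and>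
   \<sigma> 1 y \<noteq> None \<and> (f = OSqrt \<or> \<sigma> 1 z \<noteq> None)"
  by (auto split: if_splits)

lemma step_Op_cases: "step d M \<sigma> (Op f x y z) = Some \<sigma>' \<Longrightarrow> \<sigma>' l p = Some v \<Longrightarrow>
   \<sigma> l p = Some v \<or> (l = 1 \<and> v \<in> set (op_result \<sigma> (Op f x y z)))"
  by (auto split: if_splits)

lemma vals_step: "step d M \<sigma> c = Some \<sigma>' \<Longrightarrow> vals \<sigma>' \<subseteq> vals \<sigma> \<union> set (op_result \<sigma> c)"
proof (cases c)
  case (Xfer st l a b' w)
  assume s: "step d M \<sigma> c = Some \<sigma>'"
  show ?thesis unfolding vals_def using step_Xfer_cases[OF s[unfolded Xfer]] by blast
next
  case (Op f x y z)
  assume "step d M \<sigma> c = Some \<sigma>'"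
  then show ?thesis using step_Op_cases unfolding vals_def Op by blast
qed

lemma fast_vals_step: "1 \<le> b \<Longrightarrow> step d M \<sigma> c = Some \<sigma>' \<Longrightarrow> fast_vals b \<sigma>' \<subseteq> fast_vals b \<sigma> \<union> fetched b \<sigma> c \<union> set (op_result \<sigma> c)"
proof (cases c)
  case (Xfer st l a b' w)
  assume b: "1 \<le> b" and s: "step d M \<sigma> c = Some \<sigma>'"
  show ?thesis
  proof
    fix v assume "v \<in> fast_vals b \<sigma>'"
    then obtain l' p where lp: "l' \<le> b" "\<sigma>' l' p = Some v" unfolding fast_vals_def by auto
    from step_Xfer_cases[OF s[unfolded Xfer] lp(2)] lp(1)
    show "v \<in> fast_vals b \<sigma> \<union> fetched b \<sigma> c \<union> set (op_result \<sigma> c)"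
    proof (elim disjE conjE exE)
      assume "\<sigma> l' p = Some v" then show ?thesis unfolding fast_vals_def using lp(1) by blast
    next
      fix q assume "st" "l' = l + 1" "\<sigma> l (a + q) = Some v"
      then show ?thesis unfolding fast_vals_def using lp(1) by auto
    next
      fix q assume "\<not> st" "l' = l" "q < w" "\<sigma> (l+1) (a + q) = Some v"
      note h = this
      show ?thesis
      proof (cases "l = b")
        case True
        then have "v \<in> fetched b \<sigma> c" unfolding fetched_def Xfer using h by auto
        then show ?thesis by blast
      next
        case False
        then have "l+1 \<le> b" using lp(1) h by auto
        then show ?thesis unfolding fast_vals_def using h by blast
      qed
    qed
  qed
next
  case (Op f x y z)
  assume "1 \<le> b" "step d M \<sigma> c = Some \<sigma>'"
  then show ?thesis using step_Op_cases[of d M \<sigma> f x y z \<sigma>'] unfolding fast_vals_def Op by fastforce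
qed

lemma slow_vals_step: "1 \<le> b \<Longrightarrow> step d M \<sigma> c = Some \<sigma>' \<Longrightarrow> slow_vals b \<sigma>' \<subseteq> slow_vals b \<sigma> \<union> stored b \<sigma> c"
proof (cases c)
  case (Xfer st l a b' w)
  assume b: "1 \<le> b" and s: "step d M \<sigma> c = Some \<sigma>'"
  show ?thesis
  proof
    fix v assume "v \<in> slow_vals b \<sigma>'"
    then obtain l' p where lp: "b < l'" "\<sigma>' l' p = Some v" unfolding slow_vals_def by auto
    from step_Xfer_cases[OF s[unfolded Xfer] lp(2)] lp(1)
    show "v \<in> slow_vals b \<sigma> \<union> stored b \<sigma> c"
    proof (elim disjE conjE exE)
      assume "\<sigma> l' p = Some v" then show ?thesis unfolding slow_vals_def using lp(1) by blast
    next
      fix q assume "st" "l' = l + 1" "q < w" "\<sigma> l (a + q) = Some v"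
      note h = this
      show ?thesis
      proof (cases "l = b")
        case True
        then have "v \<in> stored b \<sigma> c" unfolding stored_def Xfer using h by auto
        then show ?thesis by blast
      next
        case False
        then have "b < l" using lp(1) h by auto
        then show ?thesis unfolding slow_vals_def using h by blast
      qed
    next
      fix q assume h: "\<not> st" "l' = l" "\<sigma> (l+1) (a + q) = Some v"
      then have "b < l+1" using lp(1) by simp
      then show ?thesis unfolding slow_vals_def using h by blast
    qed
  qed
next
  case (Op f x y z)
  assume "1 \<le> b" "step d M \<sigma> c = Some \<sigma>'"
  then show ?thesis using step_Op_cases[of d M \<sigma> f x y z \<sigma>'] unfolding slow_vals_def Op by fastforce
qed

lemma step_in_bounds: "step d M \<sigma> c = Some \<sigma>' \<Longrightarrow> (\<forall>l p. \<sigma> l p \<noteq> None \<longrightarrow> 1 \<le> l \<and> p < M l) \<Longrightarrow>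
   (\<forall>l p. \<sigma>' l p \<noteq> None \<longrightarrow> 1 \<le> l \<and> p < M l)"
proof (cases c)
  case (Xfer st l a b' w)
  assume "step d M \<sigma> c = Some \<sigma>'" "(\<forall>l p. \<sigma> l p \<noteq> None \<longrightarrow> 1 \<le> l \<and> p < M l)"
  then show ?thesis using Xfer by (auto simp: Let_def split: if_splits; blast)
next
  case (Op f x y z)
  assume "step d M \<sigma> c = Some \<sigma>'" "(\<forall>l p. \<sigma> l p \<noteq> None \<longrightarrow> 1 \<le> l \<and> p < M l)"
  then show ?thesis using Op by (auto split: if_splits; blast)
qed

lemma step_operands_fast: "step d M \<sigma> c = Some \<sigma>' \<Longrightarrow> r \<in> set (op_result \<sigma> c) \<Longrightarrow> x \<in> operands r \<Longrightarrow> \<exists>p. \<sigma> 1 p = Some x"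
proof (cases c)
  case (Op f x' y z)
  assume a: "step d M \<sigma> c = Some \<sigma>'" "r \<in> set (op_result \<sigma> c)" "x \<in> operands r"
  then show ?thesis using step_Op_valid[OF a(1)[unfolded Op]] Op by (cases f) auto
qed auto

lemma op_result_not_var: "r \<in> set (op_result \<sigma> c) \<Longrightarrow> \<not> is_var r"
proof (cases c)
  case (Op f x' y z)
  assume "r \<in> set (op_result \<sigma> c)"
  then show ?thesis using Op by (cases f) auto
qed auto

lemma card_fetched: "finite (fetched b \<sigma> c) \<and> card (fetched b \<sigma> c) \<le> words b c"
proof (cases c)
  case (Xfer st l a b' w)
  have "{v. \<exists>q<w. \<sigma> (b+1) (a+q) = Some v} \<subseteq> (\<lambda>q. the (\<sigma> (b+1) (a+q))) ` {..<w}" by force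
  then have "finite {v. \<exists>q<w. \<sigma> (b+1) (a+q) = Some v} \<and> card {v. \<exists>q<w. \<sigma> (b+1) (a+q) = Some v} \<le> w"
    by (metis (no_types, lifting) card_image_le card_lessThan finite_imageI finite_lessThan finite_subset card_mono le_trans)
  then show ?thesis using Xfer unfolding fetched_def words_def by auto
qed (auto simp: fetched_def)

lemma card_stored: "finite (stored b \<sigma> c) \<and> card (stored b \<sigma> c) \<le> words b c"
proof (cases c)
  case (Xfer st l a b' w)
  have "{v. \<exists>q<w. \<sigma> b (a+q) = Some v} \<subseteq> (\<lambda>q. the (\<sigma> b (a+q))) ` {..<w}" by force
  then have "finite {v. \<exists>q<w. \<sigma> b (a+q) = Some v} \<and> card {v. \<exists>q<w. \<sigma> b (a+q) = Some v} \<le> w"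
    by (metis (no_types, lifting) card_image_le card_lessThan finite_imageI finite_lessThan finite_subset card_mono le_trans)
  then show ?thesis using Xfer unfolding stored_def words_def by auto
qed (auto simp: stored_def)

lemma words_le: assumes "step d M \<sigma> c = Some \<sigma>'" shows "words b c \<le> M b"
proof (cases c)
  case (Xfer st l a b' w)
  have "w \<le> M l" using step_Xfer_valid[of d M \<sigma> st l a b' w \<sigma>'] assms Xfer by blast
  then show ?thesis using Xfer by (auto simp add: words_def)
qed (simp add: words_def)

lemma words_le_msgs: assumes "step d M \<sigma> c = Some \<sigma>'" shows "words b c \<le> M b * msgs b c"
proof (cases c)
  case (Xfer st l a b' w)
  have "w \<le> M l" using step_Xfer_valid[of d M \<sigma> st l a b' w \<sigma>'] assms Xfer by blast
  then show ?thesis using Xfer by (auto simp add: words_def msgs_def)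
qed (simp add: words_def msgs_def)

section \<open>Runs of a classical Cholesky algorithm\<close>

lemma run_trace: "run d M \<sigma> prog = Some (\<tau>, rs) \<Longrightarrow> \<exists>S. S 0 = \<sigma> \<and>
   (\<forall>t<length prog. step d M (S t) (prog!t) = Some (S (Suc t))) \<and>
   rs = concat (map (\<lambda>t. op_result (S t) (prog!t)) [0..<length prog])"
proof (induction prog arbitrary: \<sigma> \<tau> rs)
  case Nil then show ?case by auto
next
  case (Cons c cs)
  from Cons.prems obtain \<sigma>' rs' where s: "step d M \<sigma> c = Some \<sigma>'" "run d M \<sigma>' cs = Some (\<tau>, rs')"
    "rs = op_result \<sigma> c @ rs'"
    by (auto split: option.splits)
  from Cons.IH[OF s(2)] obtain S' where S': "S' 0 = \<sigma>'" "\<forall>t<length cs. step d M (S' t) (cs!t) = Some (S' (Suc t))"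
    "rs' = concat (map (\<lambda>t. op_result (S' t) (cs!t)) [0..<length cs])" by blast
  define S where "S = (\<lambda>t. case t of 0 \<Rightarrow> \<sigma> | Suc t' \<Rightarrow> S' t')"
  have "\<forall>t<length (c#cs). step d M (S t) ((c#cs)!t) = Some (S (Suc t))"
  proof (intro allI impI)
    fix t assume "t < length (c#cs)"
    then show "step d M (S t) ((c#cs)!t) = Some (S (Suc t))" using s(1) S' unfolding S_def
      by (cases t) auto
  qed
  moreover have "rs = concat (map (\<lambda>t. op_result (S t) ((c#cs)!t)) [0..<length (c#cs)])"
  proof -
    have "[0..<length (c#cs)] = 0 # map Suc [0..<length cs]"
      by (simp add: map_Suc_upt upt_conv_Cons del: upt_Suc)
    then show ?thesis using s(3) S'(3) unfolding S_def by (simp add: comp_def)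
  qed
  moreover have "S 0 = \<sigma>" unfolding S_def by simp
  ultimately show ?case by blast
qed

lemma distinct_concat_disjoint: "distinct (concat (map f [0..<m])) \<Longrightarrow> t < t' \<Longrightarrow> t' < m \<Longrightarrow> set (f t) \<inter> set (f t') = {}"
proof (induction m)
  case 0 then show ?case by simp
next
  case (Suc m)
  show ?case
  proof (cases "t' = m")
    case True
    have "set (f t) \<subseteq> set (concat (map f [0..<m]))" using Suc.prems True by auto
    then show ?thesis using Suc.prems(1) True by auto
  next
    case False then show ?thesis using Suc by auto
  qed
qed

locale chol_run = chol_comp n Lf for n Lf +
  fixes d :: nat and M :: "nat \<Rightarrow> nat" and prog :: "instr list" and S :: "nat \<Rightarrow> state" and b :: nat
  assumes init: "init_state d M n (S 0)"
  and steps: "\<forall>t<length prog. step d M (S t) (prog!t) = Some (S (Suc t))"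
  and dist: "distinct (concat (map (\<lambda>t. op_result (S t) (prog!t)) [0..<length prog]))"
  and ops: "set (concat (map (\<lambda>t. op_result (S t) (prog!t)) [0..<length prog])) = chol_ops n Lf"
  and b_bounds: "1 \<le> b" "b < d"
begin

abbreviation len where "len \<equiv> length prog"
definition results :: "nat \<Rightarrow> sexp list" where "results t = op_result (S t) (prog!t)"
definition computed :: "nat \<Rightarrow> nat \<Rightarrow> sexp set" where "computed a e = (\<Union>t\<in>{a..<e}. set (results t))"
definition fetched_in :: "nat \<Rightarrow> nat \<Rightarrow> sexp set" where "fetched_in a e = (\<Union>t\<in>{a..<e}. fetched b (S t) (prog!t))"
definition stored_in :: "nat \<Rightarrow> nat \<Rightarrow> sexp set" where "stored_in a e = (\<Union>t\<in>{a..<e}. stored b (S t) (prog!t))"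
definition words_in :: "nat \<Rightarrow> nat \<Rightarrow> nat" where "words_in a e = (\<Sum>t\<in>{a..<e}. words b (prog!t))"
\<comment> \<open>levels 1..b together play the role of the fast memory\<close>
definition fast_cap :: nat where "fast_cap = (\<Sum>l\<in>{1..b}. M l)"
definition inputs :: "nat \<Rightarrow> nat \<Rightarrow> sexp set" where "inputs a e = fast_vals b (S a) \<union> fetched_in a e"
definition outputs :: "nat \<Rightarrow> nat \<Rightarrow> sexp set" where "outputs a e = fast_vals b (S e) \<union> stored_in a e"

lemma step_at: "t < len \<Longrightarrow> step d M (S t) (prog!t) = Some (S (Suc t))" using steps by blast

lemma in_bounds: "t \<le> len \<Longrightarrow> \<forall>l p. S t l p \<noteq> None \<longrightarrow> 1 \<le> l \<and> p < M l"
proof (induction t)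
  case 0
  have "1 \<le> d" using b_bounds by simp
  then show ?case using init unfolding init_state_def by (metis le_less_linear less_one)
next
  case (Suc t)
  then have "t < len" by simp
  have h: "\<forall>l p. S t l p \<noteq> None \<longrightarrow> 1 \<le> l \<and> p < M l" using Suc by simp
  show ?case using step_in_bounds[OF step_at[OF \<open>t < len\<close>] h] by blast
qed

lemma card_fast_vals: "t \<le> len \<Longrightarrow> finite (fast_vals b (S t)) \<and> card (fast_vals b (S t)) \<le> fast_cap"
proof -
  assume t: "t \<le> len"
  let ?A = "SIGMA l:{1..b}. {..<M l}"
  have "fast_vals b (S t) \<subseteq> (\<lambda>(l,p). the (S t l p)) ` ?A"
  proof
    fix v assume "v \<in> fast_vals b (S t)"
    then obtain l p where lp: "l \<le> b" "S t l p = Some v" unfolding fast_vals_def by auto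
    then have "1 \<le> l" "p < M l" using in_bounds[OF t] by auto
    then show "v \<in> (\<lambda>(l,p). the (S t l p)) ` ?A" using lp by force
  qed
  moreover have fA: "finite ?A" by auto
  moreover have "card ?A = fast_cap" unfolding fast_cap_def by simp
  ultimately have f: "finite ((\<lambda>(l,p). the (S t l p)) ` ?A)" "fast_vals b (S t) \<subseteq> (\<lambda>(l,p). the (S t l p)) ` ?A"
     "card ((\<lambda>(l,p). the (S t l p)) ` ?A) \<le> fast_cap" using card_image_le[OF fA, of "\<lambda>(l,p). the (S t l p)"] by auto
  then have "card (fast_vals b (S t)) \<le> fast_cap" using card_mono[OF f(1,2)] by linarith
  moreover have "finite (fast_vals b (S t))" using finite_subset[OF f(2) f(1)] .
  ultimately show ?thesis by simp
qed

lemma fast_vals_init: "fast_vals b (S 0) = {}"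
  using init b_bounds unfolding init_state_def fast_vals_def by auto

lemma vals_init: "vals (S 0) \<subseteq> {v. is_var v}"
proof
  fix v assume "v \<in> vals (S 0)"
  then obtain l p where lp: "S 0 l p = Some v" unfolding vals_def by auto
  then have "l = d" using init unfolding init_state_def by (metis option.distinct(1))
  then obtain i j where "S 0 d p = Some (Var i j)" using init lp unfolding init_state_def by blast
  then show "v \<in> {v. is_var v}" using lp \<open>l = d\<close> by auto
qed

lemma fast_vals_later: "a \<le> e \<Longrightarrow> e \<le> len \<Longrightarrow> fast_vals b (S e) \<subseteq> fast_vals b (S a) \<union> fetched_in a e \<union> computed a e"
proof (induction e)
  case 0 then show ?case by auto
next
  case (Suc e)
  show ?case
  proof (cases "a = Suc e")
    case True then show ?thesis by auto
  next
    case False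
    then have "a \<le> e" "e < len" using Suc.prems by auto
    have "fast_vals b (S (Suc e)) \<subseteq> fast_vals b (S e) \<union> fetched b (S e) (prog!e) \<union> set (results e)"
      using fast_vals_step[OF b_bounds(1) step_at[OF \<open>e < len\<close>]] unfolding results_def .
    moreover have "fetched_in a e \<union> fetched b (S e) (prog!e) = fetched_in a (Suc e)"
      unfolding fetched_in_def using \<open>a \<le> e\<close> by (auto simp: atLeastLessThanSuc)
    moreover have "computed a e \<union> set (results e) = computed a (Suc e)"
      unfolding computed_def using \<open>a \<le> e\<close> by (auto simp: atLeastLessThanSuc)
    ultimately show ?thesis using Suc.IH \<open>a \<le> e\<close> \<open>e < len\<close> by auto
  qed
qed

lemma slow_vals_later: "a \<le> e \<Longrightarrow> e \<le> len \<Longrightarrow> slow_vals b (S e) \<subseteq> slow_vals b (S a) \<union> stored_in a e"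
proof (induction e)
  case 0 then show ?case by auto
next
  case (Suc e)
  show ?case
  proof (cases "a = Suc e")
    case True then show ?thesis by auto
  next
    case False
    then have "a \<le> e" "e < len" using Suc.prems by auto
    have "slow_vals b (S (Suc e)) \<subseteq> slow_vals b (S e) \<union> stored b (S e) (prog!e)"
      using slow_vals_step[OF b_bounds(1) step_at[OF \<open>e < len\<close>]] .
    moreover have "stored_in a e \<union> stored b (S e) (prog!e) = stored_in a (Suc e)"
      unfolding stored_in_def using \<open>a \<le> e\<close> by (auto simp: atLeastLessThanSuc)
    ultimately show ?thesis using Suc.IH \<open>a \<le> e\<close> \<open>e < len\<close> by auto
  qed
qed

lemma vals_later: "a \<le> e \<Longrightarrow> e \<le> len \<Longrightarrow> vals (S e) \<subseteq> vals (S a) \<union> computed a e"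
proof (induction e)
  case 0 then show ?case by auto
next
  case (Suc e)
  show ?case
  proof (cases "a = Suc e")
    case True then show ?thesis by auto
  next
    case False
    then have "a \<le> e" "e < len" using Suc.prems by auto
    have "vals (S (Suc e)) \<subseteq> vals (S e) \<union> set (results e)"
      using vals_step[OF step_at[OF \<open>e < len\<close>]] unfolding results_def .
    moreover have "computed a e \<union> set (results e) = computed a (Suc e)"
      unfolding computed_def using \<open>a \<le> e\<close> by (auto simp: atLeastLessThanSuc)
    ultimately show ?thesis using Suc.IH \<open>a \<le> e\<close> \<open>e < len\<close> by auto
  qed
qed

lemma results_unique: "t < len \<Longrightarrow> t' < len \<Longrightarrow> r \<in> set (results t) \<Longrightarrow> r \<in> set (results t') \<Longrightarrow> t = t'"
proof (rule ccontr)
  assume a: "t < len" "t' < len" "r \<in> set (results t)" "r \<in> set (results t')" "t \<noteq> t'"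
  show False
  proof (cases "t < t'")
    case True then show False using distinct_concat_disjoint[OF dist, of t t'] a unfolding results_def by blast
  next
    case False then have "t' < t" using a(5) by simp
    then show False using distinct_concat_disjoint[OF dist, of t' t] a unfolding results_def by blast
  qed
qed

lemma op_computed: "r \<in> chol_ops n Lf \<Longrightarrow> \<exists>t<len. r \<in> set (results t)"
proof -
  assume "r \<in> chol_ops n Lf"
  then have "r \<in> (\<Union>x\<in>{0..<len}. set (op_result (S x) (prog!x)))" using ops by simp
  then show ?thesis unfolding results_def by auto
qed

lemma results_not_var: "r \<in> set (results t) \<Longrightarrow> \<not> is_var r"
  using op_result_not_var unfolding results_def by blast

lemma computed_before: "t \<le> len \<Longrightarrow> x \<in> vals (S t) \<Longrightarrow> \<not> is_var x \<Longrightarrow> \<exists>u<t. x \<in> set (results u)"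
proof -
  assume a: "t \<le> len" "x \<in> vals (S t)" "\<not> is_var x"
  then have "x \<in> (\<Union>u\<in>{0..<t}. set (results u))" using vals_later[of 0 t] vals_init unfolding computed_def by blast
  then show ?thesis by auto
qed

lemma operand_fast: "t < len \<Longrightarrow> r \<in> set (results t) \<Longrightarrow> x \<in> operands r \<Longrightarrow> x \<in> fast_vals b (S t)"
  using step_operands_fast[OF step_at] b_bounds unfolding results_def fast_vals_def by blast

lemma operand_vals: "t < len \<Longrightarrow> r \<in> set (results t) \<Longrightarrow> x \<in> operands r \<Longrightarrow> x \<in> vals (S t)"
  using operand_fast vals_fast_slow by blast

lemma enters_fast: "a \<le> t \<Longrightarrow> t < e \<Longrightarrow> e \<le> len \<Longrightarrow> x \<in> fast_vals b (S t) \<Longrightarrow> x \<notin> computed a e \<Longrightarrow> x \<in> inputs a e"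
proof -
  assume a: "a \<le> t" "t < e" "e \<le> len" "x \<in> fast_vals b (S t)" "x \<notin> computed a e"
  have "x \<in> fast_vals b (S a) \<union> fetched_in a t \<union> computed a t" using fast_vals_later[of a t] a by auto
  moreover have "fetched_in a t \<subseteq> fetched_in a e" unfolding fetched_in_def using a by (intro SUP_subset_mono) auto
  moreover have "computed a t \<subseteq> computed a e" unfolding computed_def using a by (intro SUP_subset_mono) auto
  ultimately show ?thesis using a(5) unfolding inputs_def by auto
qed

lemma escapes_via_outputs: "a \<le> u \<Longrightarrow> u < e \<Longrightarrow> e \<le> t' \<Longrightarrow> t' \<le> len \<Longrightarrow> x \<in> set (results u) \<Longrightarrow> x \<in> vals (S t') \<Longrightarrow> x \<in> outputs a e"
proof -
  assume a: "a \<le> u" "u < e" "e \<le> t'" "t' \<le> len" "x \<in> set (results u)" "x \<in> vals (S t')"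
  have "x \<notin> computed e t'"
  proof
    assume "x \<in> computed e t'"
    then obtain v where "v \<in> {e..<t'}" "x \<in> set (results v)" unfolding computed_def by auto
    then show False using results_unique[of u v x] a by auto
  qed
  then have "x \<in> vals (S e)" using vals_later[of e t'] a by auto
  then have "x \<in> fast_vals b (S e) \<or> x \<in> slow_vals b (S e)" using vals_fast_slow by blast
  moreover have "x \<notin> slow_vals b (S a)"
  proof
    assume "x \<in> slow_vals b (S a)"
    then have "x \<in> vals (S a)" using vals_fast_slow by blast
    then obtain u' where "u' < a" "x \<in> set (results u')" using computed_before[of a x] results_not_var a by auto
    then show False using results_unique[of u' u x] a by auto
  qed
  moreover have "slow_vals b (S e) \<subseteq> slow_vals b (S a) \<union> stored_in a e" using slow_vals_later[of a e] a by simp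
  ultimately show ?thesis unfolding outputs_def by blast
qed

definition touched :: "nat \<Rightarrow> nat \<Rightarrow> (nat \<times> nat) set" where
  "touched a e = {(i,j). j \<le> i \<and> i < n \<and> (\<exists>z\<in>entry_nodes i j. z \<in> inputs a e \<union> outputs a e)}"

lemma computed_time: "y \<in> computed a e \<Longrightarrow> \<exists>t. a \<le> t \<and> t < e \<and> y \<in> set (results t)"
  unfolding computed_def by auto

lemma operands_not_var: "c \<in> operands y \<Longrightarrow> \<not> is_var y"
  by (cases y) auto

lemma operand_escapes:
  assumes ae: "a \<le> e" "e \<le> len" and y: "y \<in> chol_ops n Lf" "z \<in> operands y"
    and z: "z \<in> computed a e" "y \<notin> computed a e"
  shows "z \<in> outputs a e"
proof -
  obtain tz where tz: "a \<le> tz" "tz < e" "z \<in> set (results tz)" using computed_time[OF z(1)] by blast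
  obtain ty where ty: "ty < len" "y \<in> set (results ty)" using op_computed[OF y(1)] by blast
  have z_val: "z \<in> vals (S ty)" using operand_vals[OF ty y(2)] .
  obtain u where "u < ty" "z \<in> set (results u)"
    using computed_before[OF _ z_val results_not_var[OF tz(3)]] ty(1) by auto
  then have "tz < ty" using results_unique[of u tz z] tz ty(1) ae(2) by auto
  then have "e \<le> ty" using z(2) ty(2) tz(1) unfolding computed_def by fastforce
  then show ?thesis using escapes_via_outputs[OF tz(1,2) _ _ tz(3) z_val] ty(1) by auto
qed

lemma operand_enters:
  assumes "e \<le> len" "y \<in> computed a e" "c \<in> operands y" "c \<notin> computed a e"
  shows "c \<in> inputs a e"
proof -
  obtain t where t: "a \<le> t" "t < e" "y \<in> set (results t)" using computed_time[OF assms(2)] by blast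
  then have "c \<in> fast_vals b (S t)" using operand_fast assms(1,3) by simp
  then show ?thesis using enters_fast[OF t(1,2) assms(1) _ assms(4)] by blast
qed

lemma computed_touched:
  assumes ae: "a \<le> e" "e \<le> len" and ij: "j \<le> i" "i < n"
    and x: "x \<in> entry_nodes i j" "x \<in> computed a e"
  shows "(i,j) \<in> touched a e"
proof -
  let ?C = "{y \<in> entry_nodes i j. y \<in> computed a e}"
  have "\<forall>y. y \<in> ?C \<longrightarrow> size y < Suc (Max (size ` ?C))"
    using finite_entry_nodes by (simp add: le_imp_less_Suc)
  then obtain z where z: "z \<in> ?C" and z_max: "\<And>y. y \<in> ?C \<Longrightarrow> size y \<le> size z"
    using ex_has_greatest_nat[of "\<lambda>y. y \<in> ?C" x] x by blast
  show ?thesis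
  proof (cases "z = Lf i j")
    case False
    obtain y where y: "y \<in> entry_nodes i j" "z \<in> operands y"
      using entry_nodes_parent[OF ij _ False] z by blast
    then have "y \<notin> computed a e" using z_max size_operands[OF y(2)] by fastforce
    moreover have "y \<in> chol_ops n Lf" using entry_nodes_op[OF ij y(1)] operands_not_var[OF y(2)] .
    ultimately have "z \<in> outputs a e" using operand_escapes[OF ae _ y(2)] z by blast
    then show ?thesis unfolding touched_def using ij z by blast
  next
    case True
    \<comment> \<open>L(i,j) itself is computed: the lowest computed node on the path from L(i,j) down to A(i,j)
      has an operand that is not computed in the segment, hence an input\<close>
    obtain y where y: "y \<in> ?C" "var_path i j y"
      and y_min: "\<And>y'. y' \<in> ?C \<Longrightarrow> var_path i j y' \<Longrightarrow> size y \<le> size y'"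
      using ex_has_least_nat[of "\<lambda>y. y \<in> ?C \<and> var_path i j y" z size] z True
      by (auto simp: var_path_def)
    have "y \<noteq> Var i j" using y(1) results_not_var computed_time by fastforce
    then obtain c where c: "c \<in> operands y" "c \<in> entry_nodes i j" "var_path i j c"
      using var_path_operand[OF ij] y by blast
    then have "c \<notin> computed a e" using y_min size_operands[OF c(1)] by fastforce
    then have "c \<in> inputs a e" using operand_enters[OF ae(2) _ c(1)] y(1) by blast
    then show ?thesis unfolding touched_def using ij c(2) by blast
  qed
qed

lemma fast_Lf_touched:
  assumes "a \<le> t" "t < e" "e \<le> len" "k \<le> i" "i < n" "Lf i k \<in> fast_vals b (S t)"
  shows "(i,k) \<in> touched a e"
proof (cases "Lf i k \<in> computed a e")
  case True then show ?thesis using computed_touched[OF _ assms(3-5) Lf_entry_nodes] assms by auto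
next
  case False
  then have "Lf i k \<in> inputs a e" using enters_fast assms by blast
  then show ?thesis unfolding touched_def using assms(4,5) Lf_entry_nodes by blast
qed

lemma Lmul_computed_touched:
  assumes ae: "a \<le> e" "e \<le> len" and ijk: "k < j" "j < i" "i < n" and m: "Lmul i j k \<in> computed a e"
  shows "(i,k) \<in> touched a e \<and> (j,k) \<in> touched a e \<and> ((i,j) \<in> touched a e \<or> Lmul i j k \<in> outputs a e)"
proof -
  obtain t where t: "a \<le> t" "t < e" "Lmul i j k \<in> set (results t)" using computed_time[OF m] by blast
  have "Lf i k \<in> fast_vals b (S t)" "Lf j k \<in> fast_vals b (S t)"
    using operand_fast[OF _ t(3)] operands_Lmul t(2) ae(2) by auto
  then have "(i,k) \<in> touched a e" "(j,k) \<in> touched a e" using fast_Lf_touched[OF t(1,2) ae(2)] ijk by auto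
  moreover obtain y where y: "y \<in> entry_nodes i j" "Lmul i j k \<in> operands y" using Lmul_parent[OF ijk] by blast
  have "(i,j) \<in> touched a e \<or> Lmul i j k \<in> outputs a e"
  proof (cases "y \<in> computed a e")
    case True then show ?thesis using computed_touched[OF ae _ ijk(3) y(1)] ijk(2) by auto
  next
    case False
    have "y \<in> chol_ops n Lf" using entry_nodes_op[OF _ ijk(3) y(1)] operands_not_var[OF y(2)] ijk(2) by auto
    then show ?thesis using operand_escapes[OF ae _ y(2) m False] by blast
  qed
  ultimately show ?thesis by blast
qed

lemma card_fetched_in: "finite (fetched_in a e) \<and> card (fetched_in a e) \<le> words_in a e"
proof -
  have "card (fetched_in a e) \<le> (\<Sum>t\<in>{a..<e}. card (fetched b (S t) (prog!t)))"
    unfolding fetched_in_def by (rule card_UN_le) simp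
  also have "\<dots> \<le> words_in a e" unfolding words_in_def by (rule sum_mono) (use card_fetched in auto)
  finally show ?thesis unfolding fetched_in_def using card_fetched by auto
qed

lemma card_stored_in: "finite (stored_in a e) \<and> card (stored_in a e) \<le> words_in a e"
proof -
  have "card (stored_in a e) \<le> (\<Sum>t\<in>{a..<e}. card (stored b (S t) (prog!t)))"
    unfolding stored_in_def by (rule card_UN_le) simp
  also have "\<dots> \<le> words_in a e" unfolding words_in_def by (rule sum_mono) (use card_stored in auto)
  finally show ?thesis unfolding stored_in_def using card_stored by auto
qed

lemma card_inputs: "a \<le> len \<Longrightarrow> finite (inputs a e) \<and> card (inputs a e) \<le> fast_cap + words_in a e"
  using card_fast_vals[of a] card_fetched_in[of a e] card_Un_le[of "fast_vals b (S a)" "fetched_in a e"]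
  unfolding inputs_def by auto

lemma card_outputs: "e \<le> len \<Longrightarrow> finite (outputs a e) \<and> card (outputs a e) \<le> fast_cap + words_in a e"
  using card_fast_vals[of e] card_stored_in[of a e] card_Un_le[of "fast_vals b (S e)" "stored_in a e"]
  unfolding outputs_def by auto

lemma card_touched: "a \<le> e \<Longrightarrow> e \<le> len \<Longrightarrow> finite (touched a e) \<and> card (touched a e) \<le> 2 * fast_cap + 2 * words_in a e"
proof -
  assume a: "a \<le> e" "e \<le> len"
  let ?U = "inputs a e \<union> outputs a e"
  have "finite (inputs a e)" "card (inputs a e) \<le> fast_cap + words_in a e"
    "finite (outputs a e)" "card (outputs a e) \<le> fast_cap + words_in a e"
    using card_inputs[of a e] card_outputs[of e a] a by auto
  then have fU: "finite ?U" "card ?U \<le> 2 * fast_cap + 2 * words_in a e"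
    using card_Un_le[of "inputs a e" "outputs a e"] by auto
  have fA: "finite (touched a e)" by (rule finite_subset[of _ "{..<n} \<times> {..<n}"]) (auto simp: touched_def)
  define f where "f = (\<lambda>p. SOME z. z \<in> entry_nodes (fst p) (snd p) \<and> z \<in> ?U)"
  have fp: "\<And>p. p \<in> touched a e \<Longrightarrow> f p \<in> entry_nodes (fst p) (snd p) \<and> f p \<in> ?U"
    unfolding f_def touched_def by (rule someI_ex) auto
  have "inj_on f (touched a e)"
  proof
    fix p q assume pq: "p \<in> touched a e" "q \<in> touched a e" "f p = f q"
    then show "p = q" using fp[OF pq(1)] fp[OF pq(2)] entry_nodes_disjoint[of "snd p" "fst p" "snd q" "fst q"]
      unfolding touched_def by (auto simp: prod_eq_iff)
  qed
  moreover have "f ` touched a e \<subseteq> ?U" using fp by auto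
  ultimately have "card (touched a e) \<le> card ?U" using card_inj_on_le fU(1) by blast
  then show ?thesis using fA fU by linarith
qed

definition mul_triples :: "(nat \<times> nat \<times> nat) set" where "mul_triples = {(i,j,k). k < j \<and> j < i \<and> i < n}"

lemma fast_cap_pos: "0 < n \<Longrightarrow> 1 \<le> fast_cap"
proof -
  assume n: "0 < n"
  have "Lf 0 0 \<in> chol_ops n Lf" using entry_nodes_op[of 0 0] Lf_entry_nodes n Lf_shape[of 0 0] by fastforce
  then obtain t where t: "t < len" "Lf 0 0 \<in> set (results t)" using op_computed by blast
  then obtain f x y z where "prog!t = Op f x y z" unfolding results_def by (cases "prog!t") auto
  then have "1 \<le> M 1" using step_Op_valid step_at[OF t(1)] by metis
  moreover have "M 1 \<le> fast_cap" unfolding fast_cap_def using b_bounds by (intro member_le_sum) auto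
  ultimately show ?thesis by simp
qed

lemma M_le_fast_cap: "M b \<le> fast_cap" unfolding fast_cap_def using b_bounds by (intro member_le_sum) auto

lemma words_in_split: "a \<le> e \<Longrightarrow> words_in 0 e = words_in 0 a + words_in a e"
  unfolding words_in_def by (metis sum.atLeastLessThan_concat zero_le)

lemma Var_fetched:
  assumes ij: "j \<le> i" "i < n"
  shows "Var i j \<in> fetched_in 0 len"
proof -
  have "Var i j \<noteq> Lf i j" using Lf_shape[OF ij] by auto
  then obtain y where y: "y \<in> entry_nodes i j" "Var i j \<in> operands y"
    using entry_nodes_parent[OF ij Var_entry_nodes[OF ij]] by blast
  have "y \<in> chol_ops n Lf" using entry_nodes_op[OF ij y(1)] operands_not_var[OF y(2)] .
  then obtain t where "t < len" "y \<in> set (results t)" using op_computed by blast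
  then have "y \<in> computed 0 len" unfolding computed_def by auto
  moreover have "Var i j \<notin> computed 0 len" using results_not_var unfolding computed_def by fastforce
  ultimately have "Var i j \<in> inputs 0 len" using operand_enters[OF order_refl _ y(2)] by blast
  then show ?thesis unfolding inputs_def using fast_vals_init by simp
qed

lemma words_ge_inputs: "real n ^ 2 / 2 \<le> real (words_in 0 len)"
proof -
  let ?P = "SIGMA i:{..<n}. {..i}"
  have "inj_on (\<lambda>(i,j). Var i j) ?P" by (auto simp: inj_on_def)
  moreover have "(\<lambda>(i,j). Var i j) ` ?P \<subseteq> fetched_in 0 len" using Var_fetched by auto
  ultimately have "card ?P \<le> words_in 0 len"
    using card_inj_on_le card_fetched_in[of 0 len] le_trans by blast
  moreover have "2 * (\<Sum>i<m. Suc i) = m * (m + 1)" for m by (induction m) auto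
  then have "n ^ 2 \<le> 2 * card ?P" by (simp add: power2_eq_square)
  ultimately have "n ^ 2 \<le> 2 * words_in 0 len" by linarith
  then show ?thesis by (simp flip: of_nat_power)
qed

text \<open>Segment r consists of the steps t with words_in 0 t div fast_cap = r; seg_start r is its
  first step (or len), so every segment moves at most 2 fast_cap words across boundary b.\<close>

definition block :: "nat \<Rightarrow> nat" where "block t = words_in 0 t div fast_cap"
definition seg_start :: "nat \<Rightarrow> nat" where "seg_start r = (LEAST t. len \<le> t \<or> r \<le> block t)"

lemma block_mono: "t \<le> t' \<Longrightarrow> block t \<le> block t'"
  unfolding block_def using words_in_split[of t t'] by (simp add: div_le_mono)

lemma seg_start_le: "seg_start r \<le> len" unfolding seg_start_def by (rule Least_le) simp

lemma seg_start_below: "t < seg_start r \<Longrightarrow> t < len \<and> block t < r"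
  unfolding seg_start_def using not_less_Least by fastforce

lemma seg_start_block: "seg_start r < len \<Longrightarrow> r \<le> block (seg_start r)"
proof -
  assume "seg_start r < len"
  have "len \<le> seg_start r \<or> r \<le> block (seg_start r)" unfolding seg_start_def by (rule LeastI[of _ len]) simp
  then show ?thesis using \<open>seg_start r < len\<close> by simp
qed

lemma in_segment: "t < len \<Longrightarrow> seg_start (block t) \<le> t \<and> t < seg_start (Suc (block t))"
proof
  assume t: "t < len"
  show "seg_start (block t) \<le> t"
  proof (rule ccontr)
    assume "\<not> seg_start (block t) \<le> t"
    then show False using seg_start_below[of t "block t"] by simp
  qed
  show "t < seg_start (Suc (block t))"
  proof (rule ccontr)
    assume "\<not> t < seg_start (Suc (block t))"
    then have "seg_start (Suc (block t)) < len" using t by simp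
    then have "Suc (block t) \<le> block (seg_start (Suc (block t)))" by (rule seg_start_block)
    moreover have "block (seg_start (Suc (block t))) \<le> block t" using block_mono \<open>\<not> t < seg_start (Suc (block t))\<close> by simp
    ultimately show False by simp
  qed
qed

lemma seg_start_mono: "seg_start r \<le> seg_start (Suc r)"
proof (rule ccontr)
  assume a: "\<not> seg_start r \<le> seg_start (Suc r)"
  then have "seg_start (Suc r) < len" using seg_start_le[of r] by simp
  then have "Suc r \<le> block (seg_start (Suc r))" by (rule seg_start_block)
  moreover have "block (seg_start (Suc r)) < r" using seg_start_below[of "seg_start (Suc r)" r] a by simp
  ultimately show False by simp
qed

lemma words_segment: "1 \<le> fast_cap \<Longrightarrow> words_in (seg_start r) (seg_start (Suc r)) \<le> 2 * fast_cap"
proof (cases "seg_start r = seg_start (Suc r)")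
  case True then show ?thesis unfolding words_in_def by simp
next
  case False
  assume F1: "1 \<le> fast_cap"
  then have lt: "seg_start r < seg_start (Suc r)" using seg_start_mono[of r] False by simp
  define t' where "t' = seg_start (Suc r) - 1"
  have t': "seg_start r \<le> t'" "t' < len" "Suc t' = seg_start (Suc r)" using lt seg_start_le[of "Suc r"] unfolding t'_def by auto
  have "block t' < Suc r" using seg_start_below[of t' "Suc r"] t' by simp
  then have gs: "words_in 0 t' div fast_cap \<le> r" unfolding block_def by simp
  have "words_in 0 t' = fast_cap * (words_in 0 t' div fast_cap) + words_in 0 t' mod fast_cap" by simp
  moreover have "words_in 0 t' mod fast_cap < fast_cap" using F1 by simp
  moreover have "fast_cap * (words_in 0 t' div fast_cap) \<le> fast_cap * r" using gs by simp
  ultimately have Y: "words_in 0 t' < fast_cap * r + fast_cap" by linarith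
  have "r \<le> block (seg_start r)" using seg_start_block t' by simp
  then have "r \<le> words_in 0 (seg_start r) div fast_cap" unfolding block_def .
  then have "fast_cap * r \<le> fast_cap * (words_in 0 (seg_start r) div fast_cap)" by simp
  also have "\<dots> \<le> words_in 0 (seg_start r)" by simp
  finally have X: "fast_cap * r \<le> words_in 0 (seg_start r)" .
  have w: "words b (prog!t') \<le> fast_cap" using words_le[OF step_at[OF t'(2)], of b] M_le_fast_cap by simp
  have "words_in 0 (Suc t') = words_in 0 t' + words b (prog!t')" unfolding words_in_def by simp
  moreover have "words_in 0 (Suc t') = words_in 0 (seg_start r) + words_in (seg_start r) (Suc t')" using words_in_split t'(1) by simp
  ultimately have "words_in (seg_start r) (Suc t') \<le> 2 * fast_cap" using X Y w by linarith
  then show ?thesis using t'(3) by simp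
qed

definition seg_mults :: "nat \<Rightarrow> (nat \<times> nat \<times> nat) set" where
  "seg_mults r = {\<tau> \<in> mul_triples. (case \<tau> of (i,j,k) \<Rightarrow> Lmul i j k) \<in> computed (seg_start r) (seg_start (Suc r))}"

lemma finite_mul_triples: "finite mul_triples"
  by (rule finite_subset[of _ "{..<n} \<times> {..<n} \<times> {..<n}"]) (auto simp: mul_triples_def)

lemma card_escaping_mults:
  assumes "a \<le> e" "e \<le> len"
  shows "card {\<tau> \<in> mul_triples. (case \<tau> of (i,j,k) \<Rightarrow> Lmul i j k) \<in> outputs a e} \<le> card (outputs a e)"
proof (rule card_inj_on_le)
  show "inj_on (\<lambda>\<tau>. case \<tau> of (i,j,k) \<Rightarrow> Lmul i j k)
          {\<tau> \<in> mul_triples. (case \<tau> of (i,j,k) \<Rightarrow> Lmul i j k) \<in> outputs a e}"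
  proof (rule inj_onI)
    fix x y
    assume x: "x \<in> {\<tau> \<in> mul_triples. (case \<tau> of (i,j,k) \<Rightarrow> Lmul i j k) \<in> outputs a e}"
      and y: "y \<in> {\<tau> \<in> mul_triples. (case \<tau> of (i,j,k) \<Rightarrow> Lmul i j k) \<in> outputs a e}"
      and eq: "(case x of (i,j,k) \<Rightarrow> Lmul i j k) = (case y of (i,j,k) \<Rightarrow> Lmul i j k)"
    obtain i j k where x': "x = (i,j,k)" "k < j" "j < i" "i < n" using x unfolding mul_triples_def by auto
    obtain i' j' k' where y': "y = (i',j',k')" "k' < j'" "j' < i'" "i' < n"
      using y unfolding mul_triples_def by auto
    show "x = y" using Lmul_inj[OF x'(2-4) y'(2-4)] eq x'(1) y'(1) by simp
  qed
  show "finite (outputs a e)" using card_outputs[OF assms(2)] by blast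
qed auto

lemma computed_mults_cover:
  assumes "a \<le> e" "e \<le> len"
  shows "{\<tau> \<in> mul_triples. (case \<tau> of (i,j,k) \<Rightarrow> Lmul i j k) \<in> computed a e}
    \<subseteq> {(i,j,k). (i,j) \<in> touched a e \<and> (i,k) \<in> touched a e \<and> (j,k) \<in> touched a e}
      \<union> {\<tau> \<in> mul_triples. (case \<tau> of (i,j,k) \<Rightarrow> Lmul i j k) \<in> outputs a e}"
proof
  fix \<tau> assume "\<tau> \<in> {\<tau> \<in> mul_triples. (case \<tau> of (i,j,k) \<Rightarrow> Lmul i j k) \<in> computed a e}"
  then obtain i j k where t: "\<tau> = (i,j,k)" "k < j" "j < i" "i < n" "Lmul i j k \<in> computed a e"
    unfolding mul_triples_def by auto
  from Lmul_computed_touched[OF assms t(2-5)] t(1-4)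
  show "\<tau> \<in> {(i,j,k). (i,j) \<in> touched a e \<and> (i,k) \<in> touched a e \<and> (j,k) \<in> touched a e}
      \<union> {\<tau> \<in> mul_triples. (case \<tau> of (i,j,k) \<Rightarrow> Lmul i j k) \<in> outputs a e}"
    unfolding mul_triples_def by auto
qed

lemma card_seg_mults:
  assumes F: "1 \<le> fast_cap"
  shows "real (card (seg_mults r)) \<le> 39 * real fast_cap * sqrt (real fast_cap)"
proof -
  let ?a = "seg_start r" and ?e = "seg_start (Suc r)"
  let ?T = "touched ?a ?e"
  let ?Tri = "{(i,j,k). (i,j) \<in> ?T \<and> (i,k) \<in> ?T \<and> (j,k) \<in> ?T}"
  let ?Q = "{\<tau> \<in> mul_triples. (case \<tau> of (i,j,k) \<Rightarrow> Lmul i j k) \<in> outputs ?a ?e}"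
  have e: "?a \<le> ?e" "?e \<le> len" using seg_start_mono seg_start_le by auto
  have w: "words_in ?a ?e \<le> 2 * fast_cap" using words_segment[OF F] .
  have fT: "finite ?T" "card ?T \<le> 6 * fast_cap" using card_touched[OF e] w by auto
  have "real (card ?Tri) \<le> 2 * (6 * real fast_cap) * sqrt (6 * real fast_cap)"
    using fT by (intro card_triangles_le_sqrt) simp_all
  also have "\<dots> \<le> 2 * (6 * real fast_cap) * (3 * sqrt (real fast_cap))"
    using real_sqrt_le_mono[of 6 9] by (intro mult_left_mono) (simp_all add: real_sqrt_mult mult_right_mono)
  finally have tri: "real (card ?Tri) \<le> 36 * real fast_cap * sqrt (real fast_cap)" by simp
  have "card ?Q \<le> 3 * fast_cap" using card_escaping_mults[OF e] card_outputs[of ?e ?a] e(2) w by linarith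
  then have "real (card ?Q) \<le> 3 * real fast_cap * 1" by simp
  also have "\<dots> \<le> 3 * real fast_cap * sqrt (real fast_cap)" using F by (intro mult_left_mono) simp_all
  finally have Q: "real (card ?Q) \<le> 3 * real fast_cap * sqrt (real fast_cap)" .
  have "?Tri \<subseteq> {..<n} \<times> {..<n} \<times> {..<n}" by (auto simp: touched_def)
  then have "finite ?Tri" by (rule finite_subset) simp
  moreover have "finite ?Q" using finite_mul_triples by simp
  ultimately have "card (seg_mults r) \<le> card (?Tri \<union> ?Q)"
    unfolding seg_mults_def by (intro card_mono computed_mults_cover[OF e]) simp_all
  also have "\<dots> \<le> card ?Tri + card ?Q" by (rule card_Un_le)
  finally show ?thesis using tri Q by linarith
qed

lemma mul_triples_covered: "mul_triples \<subseteq> (\<Union>r\<in>{..block len}. seg_mults r)"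
proof
  fix \<tau> assume "\<tau> \<in> mul_triples"
  then obtain i j k where t: "\<tau> = (i,j,k)" "k < j" "j < i" "i < n" unfolding mul_triples_def by auto
  obtain t0 where t0: "t0 < len" "Lmul i j k \<in> set (results t0)" using op_computed Lmul_op[OF t(2,3,4)] by blast
  have "Lmul i j k \<in> computed (seg_start (block t0)) (seg_start (Suc (block t0)))" unfolding computed_def using in_segment[OF t0(1)] t0(2) by auto
  moreover have "block t0 \<le> block len" using block_mono t0(1) by simp
  ultimately show "\<tau> \<in> (\<Union>r\<in>{..block len}. seg_mults r)" unfolding seg_mults_def using \<open>\<tau> \<in> mul_triples\<close> t(1) by auto
qed

lemma card_mul_triples_le: "1 \<le> fast_cap \<Longrightarrow> real (card mul_triples) \<le> (real (words_in 0 len) / real fast_cap + 1) * (39 * real fast_cap * sqrt (real fast_cap))"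
proof -
  assume F1: "1 \<le> fast_cap"
  have "card mul_triples \<le> card (\<Union>r\<in>{..block len}. seg_mults r)"
    by (rule card_mono) (use mul_triples_covered finite_mul_triples in \<open>auto simp: seg_mults_def\<close>)
  also have "\<dots> \<le> (\<Sum>r\<in>{..block len}. card (seg_mults r))" by (rule card_UN_le) simp
  finally have "real (card mul_triples) \<le> (\<Sum>r\<in>{..block len}. real (card (seg_mults r)))" by (simp only: of_nat_le_iff of_nat_sum[symmetric])
  also have "\<dots> \<le> (\<Sum>r\<in>{..block len}. 39 * real fast_cap * sqrt (real fast_cap))" by (rule sum_mono) (use card_seg_mults F1 in auto)
  also have "\<dots> = (real (block len) + 1) * (39 * real fast_cap * sqrt (real fast_cap))" by simp
  also have "\<dots> \<le> (real (words_in 0 len) / real fast_cap + 1) * (39 * real fast_cap * sqrt (real fast_cap))"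
  proof (rule mult_right_mono)
    have "block len * fast_cap \<le> words_in 0 len" unfolding block_def by simp
    then have "real (block len) * real fast_cap \<le> real (words_in 0 len)" by (simp only: of_nat_mult[symmetric] of_nat_le_iff)
    then have "real (block len) \<le> real (words_in 0 len) / real fast_cap" using F1 by (simp add: field_simps)
    then show "real (block len) + 1 \<le> real (words_in 0 len) / real fast_cap + 1" by simp
  qed (use F1 in auto)
  finally show ?thesis .
qed

lemma card_mul_triples_ge: "6 \<le> n \<Longrightarrow> n ^ 3 \<le> 216 * card mul_triples"
proof -
  assume "6 \<le> n"
  define q where "q = n div 3"
  have "n \<le> 6 * q" "3 * q \<le> n" unfolding q_def using \<open>6 \<le> n\<close> by linarith+
  then have "n ^ 3 \<le> 216 * q ^ 3" using power_mono[of n "6 * q" 3] by (simp add: power_mult_distrib)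
  moreover have "{2*q..<3*q} \<times> {q..<2*q} \<times> {0..<q} \<subseteq> mul_triples" using \<open>3 * q \<le> n\<close> unfolding mul_triples_def by auto
  then have "card ({2*q..<3*q} \<times> {q..<2*q} \<times> {0..<q}) \<le> card mul_triples"
    by (rule card_mono[OF finite_mul_triples])
  then have "q ^ 3 \<le> card mul_triples" by (simp add: card_cartesian_product power3_eq_cube)
  ultimately show ?thesis by linarith
qed

lemma words_in_lower_bound: "real n ^ 3 / sqrt (real fast_cap) \<le> 16848 * real (words_in 0 len)"
proof (cases "n = 0")
  case False
  then have F: "1 \<le> fast_cap" using fast_cap_pos by simp
  show ?thesis
  proof (rule cube_over_sqrt_le)
    show "real n ^ 2 / 2 \<le> real (words_in 0 len)" by (rule words_ge_inputs)
    assume "6 \<le> real n"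
    then have "real n ^ 3 \<le> 216 * real (card mul_triples)"
      using card_mul_triples_ge by (metis of_nat_le_iff of_nat_mult of_nat_numeral of_nat_power)
    also have "\<dots> \<le> 216 * ((real (words_in 0 len) / real fast_cap + 1) * (39 * real fast_cap * sqrt (real fast_cap)))"
      by (intro mult_left_mono card_mul_triples_le[OF F]) simp
    also have "\<dots> = 8424 * sqrt (real fast_cap) * (real (words_in 0 len) + real fast_cap)"
      using F by (simp add: field_simps)
    finally show "real n ^ 3 \<le> 8424 * sqrt (real fast_cap) * (real (words_in 0 len) + real fast_cap)" .
  qed (use F in auto)
qed simp

end

section \<open>Costs per level\<close>

definition level_words :: "nat \<Rightarrow> instr list \<Rightarrow> nat" where
  "level_words b prog = (\<Sum>c\<leftarrow>prog. words b c)"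

definition level_msgs :: "nat \<Rightarrow> instr list \<Rightarrow> nat" where
  "level_msgs b prog = (\<Sum>c\<leftarrow>prog. msgs b c)"

lemma bw_instr_levels:
  assumes "step d M \<sigma> c = Some \<sigma>'"
  shows "bw_instr \<beta> c = (\<Sum>b=1..d-1. \<beta> b * real (words b c))"
proof (cases c)
  case (Xfer st l a b' w)
  then have "l \<in> {1..d-1}" using step_Xfer_valid[OF assms[unfolded Xfer]] by auto
  have "(\<Sum>b=1..d-1. \<beta> b * real (words b c)) = (\<Sum>b\<in>{1..d-1}. if l = b then \<beta> l * real w else 0)"
    by (rule sum.cong) (simp_all add: Xfer words_def)
  also have "\<dots> = \<beta> l * real w" using \<open>l \<in> {1..d-1}\<close> by simp
  finally show ?thesis using Xfer by simp
qed (simp add: words_def)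

lemma lat_instr_levels:
  assumes "step d M \<sigma> c = Some \<sigma>'"
  shows "lat_instr \<alpha> c = (\<Sum>b=1..d-1. \<alpha> b * real (msgs b c))"
proof (cases c)
  case (Xfer st l a b' w)
  then have "l \<in> {1..d-1}" using step_Xfer_valid[OF assms[unfolded Xfer]] by auto
  have "(\<Sum>b=1..d-1. \<alpha> b * real (msgs b c)) = (\<Sum>b\<in>{1..d-1}. if l = b then \<alpha> l else 0)"
    by (rule sum.cong) (simp_all add: Xfer msgs_def)
  also have "\<dots> = \<alpha> l" using \<open>l \<in> {1..d-1}\<close> by simp
  finally show ?thesis using Xfer by simp
qed (simp add: msgs_def)

lemma run_Cons_step:
  assumes "run d M \<sigma> (c # cs) = Some r"
  obtains \<sigma>' r' where "step d M \<sigma> c = Some \<sigma>'" "run d M \<sigma>' cs = Some r'"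
  using assms by (auto split: option.splits)

lemma bandwidth_cost_levels:
  "run d M \<sigma> prog = Some r \<Longrightarrow> bandwidth_cost \<beta> prog = (\<Sum>b=1..d-1. \<beta> b * real (level_words b prog))"
proof (induction prog arbitrary: \<sigma> r)
  case Nil then show ?case by (simp add: bandwidth_cost_def level_words_def)
next
  case (Cons c cs)
  obtain \<sigma>' r' where step: "step d M \<sigma> c = Some \<sigma>'" and run: "run d M \<sigma>' cs = Some r'"
    using run_Cons_step[OF Cons.prems] .
  have "bandwidth_cost \<beta> (c # cs) = bw_instr \<beta> c + bandwidth_cost \<beta> cs"
    by (simp add: bandwidth_cost_def)
  also have "\<dots> = (\<Sum>b=1..d-1. \<beta> b * real (words b c) + \<beta> b * real (level_words b cs))"
    by (simp only: bw_instr_levels[OF step] Cons.IH[OF run] sum.distrib)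
  finally show ?case by (simp add: level_words_def distrib_left)
qed

lemma latency_cost_levels:
  "run d M \<sigma> prog = Some r \<Longrightarrow> latency_cost \<alpha> prog = (\<Sum>b=1..d-1. \<alpha> b * real (level_msgs b prog))"
proof (induction prog arbitrary: \<sigma> r)
  case Nil then show ?case by (simp add: latency_cost_def level_msgs_def)
next
  case (Cons c cs)
  obtain \<sigma>' r' where step: "step d M \<sigma> c = Some \<sigma>'" and run: "run d M \<sigma>' cs = Some r'"
    using run_Cons_step[OF Cons.prems] .
  have "latency_cost \<alpha> (c # cs) = lat_instr \<alpha> c + latency_cost \<alpha> cs"
    by (simp add: latency_cost_def)
  also have "\<dots> = (\<Sum>b=1..d-1. \<alpha> b * real (msgs b c) + \<alpha> b * real (level_msgs b cs))"
    by (simp only: lat_instr_levels[OF step] Cons.IH[OF run] sum.distrib)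
  finally show ?case by (simp add: level_msgs_def distrib_left)
qed

lemma level_words_le_msgs: "run d M \<sigma> prog = Some r \<Longrightarrow> level_words b prog \<le> M b * level_msgs b prog"
proof (induction prog arbitrary: \<sigma> r)
  case Nil then show ?case by (simp add: level_words_def level_msgs_def)
next
  case (Cons c cs)
  obtain \<sigma>' r' where step: "step d M \<sigma> c = Some \<sigma>'" and run: "run d M \<sigma>' cs = Some r'"
    using run_Cons_step[OF Cons.prems] .
  show ?case using Cons.IH[OF run] words_le_msgs[OF step, of b]
    by (simp add: level_words_def level_msgs_def distrib_left)
qed

lemma level_words_lower_bound:
  assumes alg: "classical_cholesky_alg d M n \<sigma>0 prog"
    and M_mono: "\<And>l. 1 \<le> l \<Longrightarrow> l \<le> b \<Longrightarrow> M l \<le> M b" and b: "1 \<le> b" "b < d"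
  shows "real n ^ 3 / sqrt (real (M b)) \<le> 16848 * sqrt (real d) * real (level_words b prog)"
proof -
  obtain \<tau> rs Lf where init: "init_state d M n \<sigma>0" and run: "run d M \<sigma>0 prog = Some (\<tau>, rs)"
    and Lf: "chol_form n Lf" "distinct rs" "set rs = chol_ops n Lf"
    using alg unfolding classical_cholesky_alg_def classical_chol_def by blast
  obtain S where S: "S 0 = \<sigma>0" "\<forall>t<length prog. step d M (S t) (prog!t) = Some (S (Suc t))"
    "rs = concat (map (\<lambda>t. op_result (S t) (prog!t)) [0..<length prog])"
    using run_trace[OF run] by blast
  interpret chol_run n Lf d M prog S b
    by unfold_locales (use Lf init S b in auto)
  show ?thesis
  proof (cases "M b = 0")
    case False
    have "fast_cap \<le> b * M b"
      unfolding fast_cap_def using sum_mono[of "{1..b}" M "\<lambda>_. M b"] M_mono by simp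
    also have "\<dots> \<le> d * M b" using b by simp
    finally have sqrt_le: "sqrt (real fast_cap) \<le> sqrt (real d) * sqrt (real (M b))"
      by (simp flip: real_sqrt_mult of_nat_mult)
    have "0 < fast_cap" using False M_le_fast_cap by linarith
    have "sqrt (real d) * real n ^ 3 / (sqrt (real d) * sqrt (real (M b)))
        \<le> sqrt (real d) * real n ^ 3 / sqrt (real fast_cap)"
      by (rule divide_left_mono[OF sqrt_le]) (use False b \<open>0 < fast_cap\<close> in simp_all)
    then have "real n ^ 3 / sqrt (real (M b)) \<le> sqrt (real d) * (real n ^ 3 / sqrt (real fast_cap))"
      using b by simp
    also have "\<dots> \<le> sqrt (real d) * (16848 * real (words_in 0 len))"
      by (intro mult_left_mono words_in_lower_bound) simp
    also have "words_in 0 len = level_words b prog"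
      by (simp add: words_in_def level_words_def sum_list_sum_nth atLeast0LessThan)
    finally show ?thesis by simp
  qed simp
qed

lemma level_cost_bounds:
  assumes alg: "classical_cholesky_alg d M n \<sigma>0 prog"
    and M_mono: "\<And>l. 1 \<le> l \<Longrightarrow> l \<le> b \<Longrightarrow> M l \<le> M b" and b: "1 \<le> b" "b < d"
    and \<alpha>: "0 \<le> \<alpha> b" and \<beta>: "0 \<le> \<beta> b"
  shows "\<beta> b * (real n ^ 3 / sqrt (real (M b)) - real (M b))
           \<le> 16848 * sqrt (real d) * (\<beta> b * real (level_words b prog))"
    and "\<alpha> b * (real n ^ 3 / real (M b) powr (3/2))
           \<le> 16848 * sqrt (real d) * (\<alpha> b * real (level_msgs b prog))"
proof -
  let ?C = "16848 * sqrt (real d)"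
  have words: "real n ^ 3 / sqrt (real (M b)) \<le> ?C * real (level_words b prog)"
    by (rule level_words_lower_bound[OF alg M_mono b])
  have "\<beta> b * (real n ^ 3 / sqrt (real (M b)) - real (M b)) \<le> \<beta> b * (real n ^ 3 / sqrt (real (M b)))"
    by (rule mult_left_mono) (use \<beta> in simp_all)
  also have "\<dots> \<le> \<beta> b * (?C * real (level_words b prog))"
    using words \<beta> by (rule mult_left_mono)
  finally show "\<beta> b * (real n ^ 3 / sqrt (real (M b)) - real (M b)) \<le> ?C * (\<beta> b * real (level_words b prog))"
    by (simp only: mult.left_commute)
  obtain \<tau> rs where run: "run d M \<sigma>0 prog = Some (\<tau>, rs)"
    using alg unfolding classical_cholesky_alg_def by blast
  have "real n ^ 3 / real (M b) powr (3/2) \<le> ?C * real (level_msgs b prog)"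
  proof (cases "M b = 0")
    case False
    have "real (M b) powr (3/2) = real (M b) * sqrt (real (M b))"
      using False by (simp add: powr_add[of _ 1 "1/2", simplified] powr_half_sqrt)
    then have "real n ^ 3 / real (M b) powr (3/2) = real n ^ 3 / sqrt (real (M b)) / real (M b)"
      by simp
    also have "\<dots> \<le> ?C * real (level_words b prog) / real (M b)"
      by (rule divide_right_mono[OF words]) simp
    also have "\<dots> \<le> ?C * (real (M b) * real (level_msgs b prog)) / real (M b)"
      using level_words_le_msgs[OF run, of b]
      by (intro divide_right_mono mult_left_mono) (simp_all flip: of_nat_mult)
    also have "\<dots> = ?C * real (level_msgs b prog)" using False by simp
    finally show ?thesis .
  qed simp
  then show "\<alpha> b * (real n ^ 3 / real (M b) powr (3/2)) \<le> ?C * (\<alpha> b * real (level_msgs b prog))"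
    using mult_left_mono[OF _ \<alpha>] by (metis mult.left_commute)
qed

theorem corollary3p4:
  fixes d :: nat
  assumes "d \<ge> 1"
  shows "\<exists>c > 0. \<forall>(n::nat) (M::nat \<Rightarrow> nat) (\<alpha>::nat \<Rightarrow> real) (\<beta>::nat \<Rightarrow> real) \<sigma>0 prog.
     (\<forall>i j. 1 \<le> i \<longrightarrow> i \<le> j \<longrightarrow> j \<le> d \<longrightarrow> M i \<le> M j \<and> \<beta> i \<le> \<beta> j \<and> \<alpha> i \<le> \<alpha> j) \<longrightarrow>
     0 \<le> \<alpha> 1 \<longrightarrow> 0 \<le> \<beta> 1 \<longrightarrow>
     classical_cholesky_alg d M n \<sigma>0 prog \<longrightarrow>
       bandwidth_cost \<beta> prog \<ge>
         c * (\<Sum>i=1..d-1. \<beta> i * (real n ^ 3 / sqrt (real (M i)) - real (M i))) \<and>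
       latency_cost \<alpha> prog \<ge>
         c * (\<Sum>i=1..d-1. \<alpha> i * (real n ^ 3 / real (M i) powr (3/2)))"
proof (intro exI[of _ "1 / (16848 * sqrt (real d))"] conjI allI impI)
  let ?C = "16848 * sqrt (real d)"
  have C: "0 < ?C" using assms by simp
  then show "0 < 1 / ?C" by simp
  fix n :: nat and M :: "nat \<Rightarrow> nat" and \<alpha> \<beta> :: "nat \<Rightarrow> real" and \<sigma>0 prog
  assume mono: "\<forall>i j. 1 \<le> i \<longrightarrow> i \<le> j \<longrightarrow> j \<le> d \<longrightarrow> M i \<le> M j \<and> \<beta> i \<le> \<beta> j \<and> \<alpha> i \<le> \<alpha> j"
    and "0 \<le> \<alpha> 1" "0 \<le> \<beta> 1" and alg: "classical_cholesky_alg d M n \<sigma>0 prog"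
  obtain r where run: "run d M \<sigma>0 prog = Some r" using alg unfolding classical_cholesky_alg_def by blast
  have level: "\<beta> i * (real n ^ 3 / sqrt (real (M i)) - real (M i)) \<le> ?C * (\<beta> i * real (level_words i prog))"
    "\<alpha> i * (real n ^ 3 / real (M i) powr (3/2)) \<le> ?C * (\<alpha> i * real (level_msgs i prog))"
    if i: "i \<in> {1..d-1}" for i
  proof -
    have "\<alpha> 1 \<le> \<alpha> i" "\<beta> 1 \<le> \<beta> i" using mono[rule_format, of 1 i] i by auto
    then have "0 \<le> \<alpha> i" "0 \<le> \<beta> i" using \<open>0 \<le> \<alpha> 1\<close> \<open>0 \<le> \<beta> 1\<close> by linarith+
    moreover have "M l \<le> M i" if "1 \<le> l" "l \<le> i" for l using mono[rule_format, of l i] that i by auto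
    ultimately show "\<beta> i * (real n ^ 3 / sqrt (real (M i)) - real (M i)) \<le> ?C * (\<beta> i * real (level_words i prog))"
      "\<alpha> i * (real n ^ 3 / real (M i) powr (3/2)) \<le> ?C * (\<alpha> i * real (level_msgs i prog))"
      using level_cost_bounds[OF alg, of i] i by auto
  qed
  have "(\<Sum>i=1..d-1. \<beta> i * (real n ^ 3 / sqrt (real (M i)) - real (M i))) \<le> ?C * bandwidth_cost \<beta> prog"
    using sum_mono[OF level(1)] by (simp only: bandwidth_cost_levels[OF run] sum_distrib_left)
  then show "1 / ?C * (\<Sum>i=1..d-1. \<beta> i * (real n ^ 3 / sqrt (real (M i)) - real (M i))) \<le> bandwidth_cost \<beta> prog"
    using C by (simp add: field_simps)
  have "(\<Sum>i=1..d-1. \<alpha> i * (real n ^ 3 / real (M i) powr (3/2))) \<le> ?C * latency_cost \<alpha> prog"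
    using sum_mono[OF level(2)] by (simp only: latency_cost_levels[OF run] sum_distrib_left)
  then show "1 / ?C * (\<Sum>i=1..d-1. \<alpha> i * (real n ^ 3 / real (M i) powr (3/2))) \<le> latency_cost \<alpha> prog"
    using C by (simp add: field_simps)
qed

end
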